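(* Let $\phi$ be a PDL formula in negation normal form, and let $T$ be an expanded tableau whose root is $r=(\{\phi\} :: [\,],\bot,\emptyset,\emptyset :: \mathrm{stat},\mathrm{uev})$, with $\mathrm{stat}$ and $\mathrm{uev}$ determined from the children of $r$ by the rules. If $r$ is open (i.e. $\mathrm{stat}_r=\mathbf{open}$), then there exists a Hintikka structure for $\phi$.
   Context: Syntax of PDL. Fix disjoint countably infinite sets $\mathrm{AFml}$ (propositional atoms $p,q,\dots$) and $\mathrm{APrg}$ (atomic programs $a,b,\dots$). Formulae and programs are defined by mutual induction. Every atom is a formula and every atomic program is a program. If $\varphi,\psi$ are formulae, then $\neg\varphi$, $\varphi\wedge\psi$, $\varphi\vee\psi$ are formulae and $\varphi?$ is a program. If $\varphi$ is a formula and $\alpha$ a program, then $\langle\alpha\rangle\varphi$ and $[\alpha]\varphi$ are formulae. If $\alpha,\beta$ are programs, then $\alpha;\beta$, $\alpha\cup\beta$ and $\alpha^*$ are programs. A $\langle\rangle$-formula is any $\langle\alpha\rangle\varphi$. It is a non-atomic diamond formula if $\alpha\notin\mathrm{APrg}$. A $\langle{*}\rangle$-formula is any $\langle\alpha^*\rangle\varphi$. NNF means $\neg$ occurs only directly in front of atoms. $\mathrm{nnf}(\varphi)$ is the equivalent NNF formula obtained by pushing negations inward, and ${\sim}\varphi:=\mathrm{nnf}(\neg\varphi)$. Let $\mathrm{ppre}(\varphi):=\{\langle\alpha_1\rangle\cdots\langle\alpha_k\rangle\varphi: k\ge0,\ \alpha_i \text{ programs}\}$. Hintikka structures. - A structure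 $(W,R,L)$ for $\phi$ consists of a nonempty set $W$, a relation $R_a\subseteq W\times W$ for each $a\in\mathrm{APrg}$, and a labelling $L:W\to 2^{\mathrm{Fml}}$ with $\phi\in L(v)$ for some $v\in W$. - The relation $\leadsto$ is defined by: $\langle\alpha;\beta\rangle\chi\leadsto\langle\alpha\rangle\langle\beta\rangle\chi$; $\langle\alpha\cup\beta\rangle\chi\leadsto\langle\alpha\rangle\chi$ and $\langle\alpha\cup\beta\rangle\chi\leadsto\langle\beta\rangle\chi$; $\langle\alpha^*\rangle\chi\leadsto\chi$ and $\langle\alpha^*\rangle\chi\leadsto\langle\alpha\rangle\langle\alpha^*\rangle\chi$; $\langle\theta?\rangle\chi\leadsto\chi$; and nothing else. - A fulfilling chain for $(\varphi,\beta,w)$ in $H=(W,R,L)$ is a sequence $(w_0,\psi_0),\dots,(w_n,\psi_n)$, $n\ge0$, such that: - each $w_i\in W$, each $\psi_i\in\mathrm{ppre}(\varphi)$, and $\psi_i\in L(w_i)$; - $w_0=w$, $\psi_0=\langle\beta\rangle\varphi$, $\psi_n=\varphi$, and $\psi_i\ne\varphi$ for $i<n$; - for $i<n$: if $\psi_i=\langle a\rangle\chi$ with $a\in\mathrm{APrg}$, then $\psi_{i+1}=\chi$ and $(w_i,w_{i+1})\in R_a$; otherwise $\psi_i\leadsto\psi_{i+1}$ and $w_i=w_{i+1}$. - $\alpha$-formulae with components $(\alpha_1;\alpha_2)$ are: $\varphi\wedge\psi:(\varphi;\psi)$; $[\alpha\cup\beta]\varphi:([\alpha]\varphi;[\beta]\varphi)$;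 $[\alpha^*]\varphi:(\varphi;[\alpha][\alpha^*]\varphi)$; $\langle\psi?\rangle\varphi:(\varphi;\psi)$; $\langle\alpha;\beta\rangle\varphi:(\langle\alpha\rangle\langle\beta\rangle\varphi;\text{none})$; $[\alpha;\beta]\varphi:([\alpha][\beta]\varphi;\text{none})$. - $\beta$-formulae with components $(\beta_1;\beta_2)$ are: $\varphi\vee\psi:(\varphi;\psi)$; $\langle\alpha\cup\beta\rangle\varphi:(\langle\alpha\rangle\varphi;\langle\beta\rangle\varphi)$; $\langle\alpha^*\rangle\varphi:(\varphi;\langle\alpha\rangle\langle\alpha^*\rangle\varphi)$; $[\psi?]\varphi:(\varphi;{\sim}\psi)$. - A Hintikka structure for $\phi$ is a structure for $\phi$ such that for all $w\in W$: - (H1) $\neg p\in L(w)\Rightarrow p\notin L(w)$; - (H2) if an $\alpha$-formula is in $L(w)$ then its component(s) are in $L(w)$; - (H3) if a $\beta$-formula is in $L(w)$ then $\beta_1\in L(w)$ or $\beta_2\in L(w)$; - (H4) $\langle a\rangle\varphi\in L(w)\Rightarrow$ there is $v$ with $(w,v)\in R_a$ and $\varphi\in L(v)$; - (H5) $[a]\varphi\in L(w)\Rightarrow\varphi\in L(v)$ for all $v$ with $(w,v)\in R_a$; - (H6) $\langle\alpha^*\rangle\varphi\in L(w)\Rightarrow$ there is a fulfilling chain for $(\varphi,\alpha^*,w)$ in $H$. Tableau nodes. A node has the form $(\Gamma :: \mathrm{HCr},\mathrm{Nx},\mathrm{BD},\mathrm{BB} :: \mathrm{stat},\mathrm{uev})$,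 where: - $\Gamma$ is a finite set of formulae; - $\mathrm{HCr}$ is a finite list of pairs $(\varphi,\Delta)$ with $\varphi\in\Delta$, with length $\mathrm{len}(\mathrm{HCr})$, $j$-th entry $\mathrm{HCr}[j]$, and concatenation $@$; - $\mathrm{Nx}$ is $\bot$ or a formula; - $\mathrm{BD},\mathrm{BB}$ are sets of formulae; - $\mathrm{stat}\in\{\mathbf{unsat},\mathbf{open},\mathbf{barred}\}$; - $\mathrm{uev}$ is a partial function from pairs ($\langle\rangle$-formula, $\langle{*}\rangle$-formula) to positive integers ($\bot$ = undefined). Auxiliary functions: - $\mathrm{uev}_\bot$ is everywhere undefined. - $\mathrm{tst}(\chi)=\chi$ if $\chi$ is a non-atomic diamond formula, else $\bot$. - $\mathrm{bl}(\chi,\Gamma)=\Gamma$ if $\chi$ is a non-atomic diamond formula, else $\emptyset$. - $\min_\bot(f,g)(\chi_1,\chi_2)$ is undefined if either value is undefined, else the minimum. Rules. The premise set is the displayed principal formula disjointly united with $\Gamma$. Unmentioned histories are copied from parent to children; one-child rules copy the child's $\mathrm{stat}$ to the parent. Terminal rules: - (id): applicable if $\{p,\neg p\}\subseteq\Gamma$; set $\mathrm{stat}:=\mathbf{unsat}$ and $\mathrm{uev}:=\mathrm{uev}_\bot$. - ($\langle*\rangle_2$): premise $\langle\alpha^*\rangle\varphi,\Gamma$ with $\mathrm{Nx}\in\{\bot,\langle\alpha^*\rangle\varphi\}$ and $\langle\alpha^*\rangle\varphi\in\mathrm{BD}$; set $\mathrm{stat}:=\mathbf{barred}$ and $\mathrm{uev}:=\mathrm{uev}_\bot$.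 Linear rules with $\mathrm{Nx}=\bot$, in each of which $\mathrm{uev}(\chi_1,\chi_2)=\mathrm{uev}_1(\chi_1,\chi_2)$ if $\chi_1\in\Gamma$, else $\bot$: - ($\wedge$): $\varphi\wedge\psi,\Gamma$ has the child $\{\varphi,\psi\}\cup\Gamma$; - ($[\cup]$): $[\alpha\cup\beta]\varphi,\Gamma$ has the child $\{[\alpha]\varphi,[\beta]\varphi\}\cup\Gamma$; - ($[;]$): $[\alpha;\beta]\varphi,\Gamma$ has the child $\{[\alpha][\beta]\varphi\}\cup\Gamma$; - ($[*]$): $[\alpha^*]\varphi,\Gamma$ has a child with set $\Gamma$ if $[\alpha^*]\varphi\in\mathrm{BB}$ and $\{\varphi,[\alpha][\alpha^*]\varphi\}\cup\Gamma$ otherwise, and $\mathrm{BB}_1=\{[\alpha^*]\varphi\}\cup\mathrm{BB}$. Further linear rules: - ($\langle;\rangle$): premise $\langle\alpha;\beta\rangle\varphi,\Gamma$ with $\mathrm{Nx}\in\{\bot,\langle\alpha;\beta\rangle\varphi\}$. The child is $\{\langle\alpha\rangle\langle\beta\rangle\varphi\}\cup\Gamma$ with $\mathrm{Nx}_1=\mathrm{tst}(\langle\alpha\rangle\langle\beta\rangle\varphi)$ and $\mathrm{BD}_1=\mathrm{bl}(\langle\alpha\rangle\langle\beta\rangle\varphi,\mathrm{BD})$. Set $\mathrm{uev}(\chi_1,\chi_2)$ to be $\mathrm{uev}_1(\langle\alpha\rangle\langle\beta\rangle\varphi,\chi_2)$ if $\chi_1$ is the principal formula; $\mathrm{uev}_1(\chi_1,\chi_2)$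 if $\chi_1\in\Gamma$; and $\bot$ otherwise. - ($\langle?\rangle$): premise $\langle\psi?\rangle\varphi,\Gamma$ with $\mathrm{Nx}\in\{\bot,\langle\psi?\rangle\varphi\}$. The child is $\{\psi,\varphi\}\cup\Gamma$ with $\mathrm{Nx}_1=\mathrm{tst}(\varphi)$ and $\mathrm{BD}_1=\mathrm{bl}(\varphi,\mathrm{BD})$. Set $\mathrm{uev}(\chi_1,\chi_2)$ to be $\mathrm{uev}_1(\varphi,\chi_2)$ if $\chi_1$ is the principal formula; $\mathrm{uev}_1(\chi_1,\chi_2)$ if $\chi_1\in\Gamma$; and $\bot$ otherwise. Branching rules ($i=1,2$): - ($\vee$): premise $\varphi_1\vee\varphi_2,\Gamma$ with $\mathrm{Nx}=\bot$; children $\{\varphi_i\}\cup\Gamma$. - ($[?]$): premise $[\psi?]\varphi,\Gamma$ with $\mathrm{Nx}=\bot$; children $\{{\sim}\psi\}\cup\Gamma$ and $\{\varphi\}\cup\Gamma$. - For both of these, $\mathrm{uev}'_i(\chi_1,\chi_2)=\mathrm{uev}_i(\chi_1,\chi_2)$ if $\chi_1\in\Gamma$, else $\bot$. - ($\langle\cup\rangle$): premise $\langle\alpha_1\cup\alpha_2\rangle\varphi,\Gamma$ with $\mathrm{Nx}\in\{\bot,\text{principal formula}\}$. The children are $\{\langle\alpha_i\rangle\varphi\}\cup\Gamma$ with $\mathrm{Nx}_i=\mathrm{tst}(\langle\alpha_i\rangle\varphi)$ and $\mathrm{BD}_i=\mathrm{bl}(\langle\alpha_i\rangle\varphi,\mathrm{BD})$.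 Set $\mathrm{uev}'_i(\chi_1,\chi_2)$ to be $\mathrm{uev}_i(\langle\alpha_i\rangle\varphi,\chi_2)$ if $\chi_1$ is the principal formula; $\mathrm{uev}_i(\chi_1,\chi_2)$ if $\chi_1\in\Gamma$; and $\bot$ otherwise. - ($\langle*\rangle_1$): premise $\langle\alpha^*\rangle\varphi,\Gamma$ with $\mathrm{Nx}\in\{\bot,\langle\alpha^*\rangle\varphi\}$ and $\langle\alpha^*\rangle\varphi\notin\mathrm{BD}$. - Child 1 is $\{\varphi\}\cup\Gamma$ with $\mathrm{Nx}_1=\mathrm{tst}(\varphi)$ and $\mathrm{BD}_1=\mathrm{bl}(\varphi,\{\langle\alpha^*\rangle\varphi\}\cup\mathrm{BD})$. - Child 2 is $\{\langle\alpha\rangle\langle\alpha^*\rangle\varphi\}\cup\Gamma$ with $\mathrm{Nx}_2=\mathrm{tst}(\langle\alpha\rangle\langle\alpha^*\rangle\varphi)$ and $\mathrm{BD}_2=\mathrm{bl}(\langle\alpha\rangle\langle\alpha^*\rangle\varphi,\{\langle\alpha^*\rangle\varphi\}\cup\mathrm{BD})$. - $\mathrm{uev}'_1(\chi_1,\chi_2)$ is $\bot$ if $\chi_1=\chi_2=\langle\alpha^*\rangle\varphi$; $\mathrm{uev}_1(\varphi,\chi_2)$ if $\chi_1=\langle\alpha^*\rangle\varphi\ne\chi_2$; $\mathrm{uev}_1(\chi_1,\chi_2)$ if $\chi_1\in\Gamma$; and $\bot$ otherwise. - $\mathrm{uev}'_2(\chi_1,\chi_2)$ is $\mathrm{uev}_2(\langle\alpha\rangle\langle\alpha^*\rangle\varphi,\chi_2)$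 if $\chi_1=\langle\alpha^*\rangle\varphi$; $\mathrm{uev}_2(\chi_1,\chi_2)$ if $\chi_1\in\Gamma$; and $\bot$ otherwise. For all branching rules, the parent's variables are computed as follows. - $\mathrm{stat}=\mathbf{unsat}$ if both children are $\mathbf{unsat}$; $\mathbf{open}$ if some child is $\mathbf{open}$; and $\mathbf{barred}$ otherwise. - $\mathrm{uev}=\mathrm{uev}_\bot$ if $\mathrm{stat}\ne\mathbf{open}$. - Otherwise $\mathrm{uev}=\mathrm{uev}'_i$ if only child $i$ is open, and $\min_\bot(\mathrm{uev}'_1,\mathrm{uev}'_2)$ if both are open. Existential rule ($\langle\rangle$). The premise set is $\{\langle a_1\rangle\varphi_1,\dots,\langle a_{n+m}\rangle\varphi_{n+m}\}\uplus[-]\Delta\uplus\Gamma$, $n+m\ge0$, subject to the following conditions. - Each $a_i\in\mathrm{APrg}$. - $\Gamma$ consists only of atoms and negated atoms, with no $\{p,\neg p\}\subseteq\Gamma$. - $[-]\Delta$ consists only of formulae $[a]\psi$ with $a\in\mathrm{APrg}$. - Let $\Delta_i=\{\psi:[a_i]\psi\in[-]\Delta\}$. For $i\le n$, the pair $(\varphi_i,\{\varphi_i\}\cup\Delta_i)$ is not an entry of $\mathrm{HCr}$. For $n<k\le n+m$, $(\varphi_k,\{\varphi_k\}\cup\Delta_k)=\mathrm{HCr}[j]$ for some $j$. The children, for $i\le n$, are $\{\varphi_i\}\cup\Delta_i$ with $\mathrm{HCr}_i=\mathrm{HCr}\,@\,[(\varphi_i,\{\varphi_i\}\cup\Delta_i)]$,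 $\mathrm{Nx}_i=\mathrm{tst}(\varphi_i)$ and $\mathrm{BD}_i=\mathrm{BB}_i=\emptyset$. The parent's variables are computed as follows. - $\mathrm{stat}=\mathbf{unsat}$ if some $i\le n$ has $\mathrm{stat}_i\ne\mathbf{open}$, or there exist $i\le n$ and a $\langle{*}\rangle$-formula $\psi$ with $\varphi_i\in\mathrm{ppre}(\psi)$ and $\mathrm{uev}_i(\varphi_i,\psi)$ defined and $>\mathrm{len}(\mathrm{HCr})$. Otherwise $\mathrm{stat}=\mathbf{open}$. - For $n<k\le n+m$, $\mathrm{uev}_k$ is constantly $j$, where $\mathrm{HCr}[j]=(\varphi_k,\{\varphi_k\}\cup\Delta_k)$. - $\mathrm{uev}(\chi_1,\chi_2)=\mathrm{uev}_i(\varphi_i,\chi_2)$ if $\mathrm{stat}=\mathbf{open}$, $\chi_2$ is a $\langle{*}\rangle$-formula, $\chi_1\in\mathrm{ppre}(\chi_2)$ and $\chi_1=\langle a_i\rangle\varphi_i$ for some $i\le n+m$. Otherwise $\mathrm{uev}(\chi_1,\chi_2)=\bot$. Tableau. A tableau is a tree of nodes in which the children of each node come from a single application of one applicable rule (free choice), and each parent's $\mathrm{stat}$ and $\mathrm{uev}$ are computed from its children. It is expanded if no rule can be applied to any leaf. *)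

theory Defs
  imports Main
begin

text \<open>Propositional atoms and atomic programs are both indexed by nat
  (two countably infinite, disjoint sets, since they live in different constructors).\<close>

datatype fml = Atom nat | Neg fml | And fml fml | Or fml fml
  | Dia prg fml | Box prg fml
and prg = AP nat | Test fml | Seq prg prg | Choice prg prg | Star prg

fun is_nnf :: "fml \<Rightarrow> bool" and is_nnf_prg :: "prg \<Rightarrow> bool" where
  "is_nnf (Atom p) = True"
| "is_nnf (Neg f) = (\<exists>p. f = Atom p)"
| "is_nnf (And a b) = (is_nnf a \<and> is_nnf b)"
| "is_nnf (Or a b) = (is_nnf a \<and> is_nnf b)"
| "is_nnf (Dia a f) = (is_nnf_prg a \<and> is_nnf f)"
| "is_nnf (Box a f) = (is_nnf_prg a \<and> is_nnf f)"
| "is_nnf_prg (AP a) = True"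
| "is_nnf_prg (Test f) = is_nnf f"
| "is_nnf_prg (Seq a b) = (is_nnf_prg a \<and> is_nnf_prg b)"
| "is_nnf_prg (Choice a b) = (is_nnf_prg a \<and> is_nnf_prg b)"
| "is_nnf_prg (Star a) = is_nnf_prg a"

fun nnf :: "fml \<Rightarrow> fml" and nnfn :: "fml \<Rightarrow> fml" and nnfp :: "prg \<Rightarrow> prg" where
  "nnf (Atom p) = Atom p"
| "nnf (Neg f) = nnfn f"
| "nnf (And a b) = And (nnf a) (nnf b)"
| "nnf (Or a b) = Or (nnf a) (nnf b)"
| "nnf (Dia a f) = Dia (nnfp a) (nnf f)"
| "nnf (Box a f) = Box (nnfp a) (nnf f)"
| "nnfn (Atom p) = Neg (Atom p)"
| "nnfn (Neg f) = nnf f"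
| "nnfn (And a b) = Or (nnfn a) (nnfn b)"
| "nnfn (Or a b) = And (nnfn a) (nnfn b)"
| "nnfn (Dia a f) = Box (nnfp a) (nnfn f)"
| "nnfn (Box a f) = Dia (nnfp a) (nnfn f)"
| "nnfp (AP a) = AP a"
| "nnfp (Test f) = Test (nnf f)"
| "nnfp (Seq a b) = Seq (nnfp a) (nnfp b)"
| "nnfp (Choice a b) = Choice (nnfp a) (nnfp b)"
| "nnfp (Star a) = Star (nnfp a)"

definition sim :: "fml \<Rightarrow> fml" where "sim f = nnf (Neg f)"

definition is_atdia :: "fml \<Rightarrow> bool" where
  "is_atdia f \<longleftrightarrow> (\<exists>a g. f = Dia (AP a) g)"
definition is_atbox :: "fml \<Rightarrow> bool" where
  "is_atbox f \<longleftrightarrow> (\<exists>a g. f = Box (AP a) g)"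
definition is_lit :: "fml \<Rightarrow> bool" where
  "is_lit f \<longleftrightarrow> (\<exists>p. f = Atom p \<or> f = Neg (Atom p))"
definition is_nadia :: "fml \<Rightarrow> bool" where
  "is_nadia f \<longleftrightarrow> (\<exists>a g. f = Dia a g) \<and> \<not> is_atdia f"
definition is_stardia :: "fml \<Rightarrow> bool" where
  "is_stardia f \<longleftrightarrow> (\<exists>a g. f = Dia (Star a) g)"

inductive_set ppre :: "fml \<Rightarrow> fml set" for \<phi> :: fml where
  ppre_base: "\<phi> \<in> ppre \<phi>"
| ppre_step: "\<psi> \<in> ppre \<phi> \<Longrightarrow> Dia a \<psi> \<in> ppre \<phi>"

text \<open>The relation \<leadsto>: leads f is the set of g with f \<leadsto> g.\<close>
fun leads :: "fml \<Rightarrow> fml set" where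
  "leads (Dia (Seq a b) x) = {Dia a (Dia b x)}"
| "leads (Dia (Choice a b) x) = {Dia a x, Dia b x}"
| "leads (Dia (Star a) x) = {x, Dia a (Dia (Star a) x)}"
| "leads (Dia (Test t) x) = {x}"
| "leads _ = {}"

fun atdia_parts :: "fml \<Rightarrow> (nat \<times> fml) option" where
  "atdia_parts (Dia (AP a) x) = Some (a, x)"
| "atdia_parts _ = None"

definition fulfilling_chain ::
  "'w set \<Rightarrow> (nat \<Rightarrow> ('w \<times> 'w) set) \<Rightarrow> ('w \<Rightarrow> fml set) \<Rightarrow> fml \<Rightarrow> prg \<Rightarrow> 'w
   \<Rightarrow> ('w \<times> fml) list \<Rightarrow> bool" where
  "fulfilling_chain W R L \<phi> \<beta> w c \<longleftrightarrow>
     c \<noteq> [] \<and>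
     (\<forall>i<length c. fst (c!i) \<in> W \<and> snd (c!i) \<in> ppre \<phi> \<and> snd (c!i) \<in> L (fst (c!i))) \<and>
     c!0 = (w, Dia \<beta> \<phi>) \<and> snd (last c) = \<phi> \<and>
     (\<forall>i. i < length c - 1 \<longrightarrow> snd (c!i) \<noteq> \<phi>) \<and>
     (\<forall>i. Suc i < length c \<longrightarrow>
        (case atdia_parts (snd (c!i)) of
           Some (a, \<chi>) \<Rightarrow> snd (c!Suc i) = \<chi> \<and> (fst (c!i), fst (c!Suc i)) \<in> R a
         | None \<Rightarrow> snd (c!Suc i) \<in> leads (snd (c!i)) \<and> fst (c!i) = fst (c!Suc i)))"

text \<open>alpha-formulae and their components (empty set if not an alpha-formula)\<close>
fun alpha_comps :: "fml \<Rightarrow> fml set" where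
  "alpha_comps (And a b) = {a, b}"
| "alpha_comps (Box (Choice a b) x) = {Box a x, Box b x}"
| "alpha_comps (Box (Star a) x) = {x, Box a (Box (Star a) x)}"
| "alpha_comps (Dia (Test \<psi>) x) = {x, \<psi>}"
| "alpha_comps (Dia (Seq a b) x) = {Dia a (Dia b x)}"
| "alpha_comps (Box (Seq a b) x) = {Box a (Box b x)}"
| "alpha_comps _ = {}"

fun beta_comps :: "fml \<Rightarrow> (fml \<times> fml) option" where
  "beta_comps (Or a b) = Some (a, b)"
| "beta_comps (Dia (Choice a b) x) = Some (Dia a x, Dia b x)"
| "beta_comps (Dia (Star a) x) = Some (x, Dia a (Dia (Star a) x))"
| "beta_comps (Box (Test \<psi>) x) = Some (x, sim \<psi>)"
| "beta_comps _ = None"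

definition is_structure ::
  "'w set \<Rightarrow> (nat \<Rightarrow> ('w \<times> 'w) set) \<Rightarrow> ('w \<Rightarrow> fml set) \<Rightarrow> fml \<Rightarrow> bool" where
  "is_structure W R L \<phi> \<longleftrightarrow> W \<noteq> {} \<and> (\<forall>a. R a \<subseteq> W \<times> W) \<and> (\<exists>v\<in>W. \<phi> \<in> L v)"

definition hintikka_structure ::
  "'w set \<Rightarrow> (nat \<Rightarrow> ('w \<times> 'w) set) \<Rightarrow> ('w \<Rightarrow> fml set) \<Rightarrow> fml \<Rightarrow> bool" where
  "hintikka_structure W R L \<phi> \<longleftrightarrow> is_structure W R L \<phi> \<and>
    (\<forall>w\<in>W.
      (\<forall>p. Neg (Atom p) \<in> L w \<longrightarrow> Atom p \<notin> L w) \<and>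
      (\<forall>f\<in>L w. alpha_comps f \<subseteq> L w) \<and>
      (\<forall>f\<in>L w. \<forall>b1 b2. beta_comps f = Some (b1, b2) \<longrightarrow> b1 \<in> L w \<or> b2 \<in> L w) \<and>
      (\<forall>a \<phi>'. Dia (AP a) \<phi>' \<in> L w \<longrightarrow> (\<exists>v. (w, v) \<in> R a \<and> \<phi>' \<in> L v)) \<and>
      (\<forall>a \<phi>' v. Box (AP a) \<phi>' \<in> L w \<longrightarrow> (w, v) \<in> R a \<longrightarrow> \<phi>' \<in> L v) \<and>
      (\<forall>\<alpha> \<phi>'. Dia (Star \<alpha>) \<phi>' \<in> L w \<longrightarrow> (\<exists>c. fulfilling_chain W R L \<phi>' (Star \<alpha>) w c)))"

datatype stat = Unsat | Open | Barred

text \<open>uev: partial function (None = undefined) from pairs of formulae to positive integers\<close>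
type_synonym uevt = "fml \<Rightarrow> fml \<Rightarrow> nat option"

text \<open>The "history" part of a node: Gamma, HCr, Nx (None = bottom), BD, BB.\<close>
record pnode =
  gam :: "fml set"
  hcr :: "(fml \<times> fml set) list"
  nx  :: "fml option"
  bd  :: "fml set"
  bb  :: "fml set"

type_synonym cinfo = "pnode \<times> stat \<times> uevt"

definition uev_bot :: uevt where "uev_bot = (\<lambda>_ _. None)"

definition tst :: "fml \<Rightarrow> fml option" where
  "tst f = (if is_nadia f then Some f else None)"

definition bl :: "fml \<Rightarrow> fml set \<Rightarrow> fml set" where
  "bl f G = (if is_nadia f then G else {})"

definition min_bot :: "uevt \<Rightarrow> uevt \<Rightarrow> uevt" where
  "min_bot f g = (\<lambda>x y. case (f x y, g x y) of (Some a, Some b) \<Rightarrow> Some (min a b) | _ \<Rightarrow> None)"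

definition restr :: "fml set \<Rightarrow> uevt \<Rightarrow> uevt" where
  "restr G u = (\<lambda>x y. if x \<in> G then u x y else None)"

definition rule_id :: "pnode \<Rightarrow> cinfo list \<Rightarrow> stat \<Rightarrow> uevt \<Rightarrow> bool" where
  "rule_id p cs s u \<longleftrightarrow> (\<exists>q. Atom q \<in> gam p \<and> Neg (Atom q) \<in> gam p) \<and>
     cs = [] \<and> s = Unsat \<and> u = uev_bot"

definition rule_star2 :: "pnode \<Rightarrow> fml \<Rightarrow> cinfo list \<Rightarrow> stat \<Rightarrow> uevt \<Rightarrow> bool" where
  "rule_star2 p F cs s u \<longleftrightarrow> (\<exists>\<alpha> \<phi>. F = Dia (Star \<alpha>) \<phi>) \<and> F \<in> gam p \<and>
     (nx p = None \<or> nx p = Some F) \<and> F \<in> bd p \<and> cs = [] \<and> s = Barred \<and> u = uev_bot"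

definition lin1 :: "pnode \<Rightarrow> fml \<Rightarrow> pnode \<Rightarrow> cinfo list \<Rightarrow> stat \<Rightarrow> uevt \<Rightarrow> bool" where
  "lin1 p F c cs s u \<longleftrightarrow> nx p = None \<and>
     (\<exists>s1 u1. cs = [(c, s1, u1)] \<and> s = s1 \<and> u = restr (gam p - {F}) u1)"

text \<open>Linear diamond rules (<;>) and (<?>): new formulas N added, key formula K.\<close>
definition dlin :: "pnode \<Rightarrow> fml \<Rightarrow> fml set \<Rightarrow> fml \<Rightarrow> cinfo list \<Rightarrow> stat \<Rightarrow> uevt \<Rightarrow> bool" where
  "dlin p F N K cs s u \<longleftrightarrow> (nx p = None \<or> nx p = Some F) \<and>
     (\<exists>s1 u1. cs = [(p\<lparr>gam := N \<union> (gam p - {F}), nx := tst K, bd := bl K (bd p)\<rparr>, s1, u1)] \<and>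
       s = s1 \<and>
       u = (\<lambda>x y. if x = F then u1 K y else if x \<in> gam p - {F} then u1 x y else None))"

definition branch_stat :: "stat \<Rightarrow> stat \<Rightarrow> stat" where
  "branch_stat s1 s2 = (if s1 = Unsat \<and> s2 = Unsat then Unsat
     else if s1 = Open \<or> s2 = Open then Open else Barred)"

definition branch_uev :: "stat \<Rightarrow> stat \<Rightarrow> uevt \<Rightarrow> uevt \<Rightarrow> uevt" where
  "branch_uev s1 s2 u1' u2' = (if branch_stat s1 s2 \<noteq> Open then uev_bot
     else if s1 = Open \<and> s2 = Open then min_bot u1' u2'
     else if s1 = Open then u1' else u2')"

definition branch :: "pnode \<Rightarrow> pnode \<Rightarrow> (uevt \<Rightarrow> uevt) \<Rightarrow> (uevt \<Rightarrow> uevt)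
     \<Rightarrow> cinfo list \<Rightarrow> stat \<Rightarrow> uevt \<Rightarrow> bool" where
  "branch c1 c2 t1 t2 cs s u \<longleftrightarrow> (\<exists>s1 u1 s2 u2. cs = [(c1, s1, u1), (c2, s2, u2)] \<and>
     s = branch_stat s1 s2 \<and> u = branch_uev s1 s2 (t1 u1) (t2 u2))"

definition prin_rule :: "pnode \<Rightarrow> fml \<Rightarrow> cinfo list \<Rightarrow> stat \<Rightarrow> uevt \<Rightarrow> bool" where
  "prin_rule p F cs s u \<longleftrightarrow> F \<in> gam p \<and> (let G = gam p - {F} in
     (\<exists>a b. F = And a b \<and> lin1 p F (p\<lparr>gam := {a, b} \<union> G\<rparr>) cs s u)
   \<or> (\<exists>a b x. F = Box (Choice a b) x \<and> lin1 p F (p\<lparr>gam := {Box a x, Box b x} \<union> G\<rparr>) cs s u)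
   \<or> (\<exists>a b x. F = Box (Seq a b) x \<and> lin1 p F (p\<lparr>gam := {Box a (Box b x)} \<union> G\<rparr>) cs s u)
   \<or> (\<exists>a x. F = Box (Star a) x \<and>
        lin1 p F (p\<lparr>gam := (if F \<in> bb p then G else {x, Box a F} \<union> G), bb := insert F (bb p)\<rparr>) cs s u)
   \<or> (\<exists>a b x. F = Dia (Seq a b) x \<and> dlin p F {Dia a (Dia b x)} (Dia a (Dia b x)) cs s u)
   \<or> (\<exists>\<psi> x. F = Dia (Test \<psi>) x \<and> dlin p F {\<psi>, x} x cs s u)
   \<or> (\<exists>a b. F = Or a b \<and> nx p = None \<and>
        branch (p\<lparr>gam := {a} \<union> G\<rparr>) (p\<lparr>gam := {b} \<union> G\<rparr>) (restr G) (restr G) cs s u)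
   \<or> (\<exists>\<psi> x. F = Box (Test \<psi>) x \<and> nx p = None \<and>
        branch (p\<lparr>gam := {sim \<psi>} \<union> G\<rparr>) (p\<lparr>gam := {x} \<union> G\<rparr>) (restr G) (restr G) cs s u)
   \<or> (\<exists>a1 a2 x. F = Dia (Choice a1 a2) x \<and> (nx p = None \<or> nx p = Some F) \<and>
        branch (p\<lparr>gam := {Dia a1 x} \<union> G, nx := tst (Dia a1 x), bd := bl (Dia a1 x) (bd p)\<rparr>)
               (p\<lparr>gam := {Dia a2 x} \<union> G, nx := tst (Dia a2 x), bd := bl (Dia a2 x) (bd p)\<rparr>)
               (\<lambda>u1 c1 c2. if c1 = F then u1 (Dia a1 x) c2 else if c1 \<in> G then u1 c1 c2 else None)
               (\<lambda>u2 c1 c2. if c1 = F then u2 (Dia a2 x) c2 else if c1 \<in> G then u2 c1 c2 else None)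
               cs s u)
   \<or> (\<exists>a x. F = Dia (Star a) x \<and> (nx p = None \<or> nx p = Some F) \<and> F \<notin> bd p \<and>
        branch (p\<lparr>gam := {x} \<union> G, nx := tst x, bd := bl x (insert F (bd p))\<rparr>)
               (p\<lparr>gam := {Dia a F} \<union> G, nx := tst (Dia a F), bd := bl (Dia a F) (insert F (bd p))\<rparr>)
               (\<lambda>u1 c1 c2. if c1 = F \<and> c2 = F then None else if c1 = F then u1 x c2
                           else if c1 \<in> G then u1 c1 c2 else None)
               (\<lambda>u2 c1 c2. if c1 = F then u2 (Dia a F) c2 else if c1 \<in> G then u2 c1 c2 else None)
               cs s u)
   \<or> rule_star2 p F cs s u)"

text \<open>The diamonds <a>phi of the premise are split into new ones
  (whose HCr-entry is not in HCr; listed without repetition as ds, children in the same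
  order) and old ones (whose entry is HCr[j], positions counted from 1).\<close>
definition rule_ex :: "pnode \<Rightarrow> cinfo list \<Rightarrow> stat \<Rightarrow> uevt \<Rightarrow> bool" where
  "rule_ex p cs s u \<longleftrightarrow>
     (\<forall>f\<in>gam p. is_atdia f \<or> is_atbox f \<or> is_lit f) \<and>
     \<not> (\<exists>q. Atom q \<in> gam p \<and> Neg (Atom q) \<in> gam p) \<and>
     (let Del = (\<lambda>a. {\<psi>. Box (AP a) \<psi> \<in> gam p});
          entry = (\<lambda>a \<phi>. (\<phi>, insert \<phi> (Del a)));
          newd = {(a, \<phi>). Dia (AP a) \<phi> \<in> gam p \<and> entry a \<phi> \<notin> set (hcr p)};
          oldd = {(a, \<phi>). Dia (AP a) \<phi> \<in> gam p \<and> entry a \<phi> \<in> set (hcr p)};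
          child = (\<lambda>(a, \<phi>). \<lparr>gam = insert \<phi> (Del a), hcr = hcr p @ [entry a \<phi>],
                             nx = tst \<phi>, bd = {}, bb = {}\<rparr>)
      in \<exists>ds. distinct ds \<and> set ds = newd \<and> length cs = length ds \<and>
           (\<forall>i<length ds. fst (cs!i) = child (ds!i)) \<and>
           s = (if (\<exists>i<length ds. fst (snd (cs!i)) \<noteq> Open) \<or>
                   (\<exists>i<length ds. \<exists>\<psi> k. is_stardia \<psi> \<and> snd (ds!i) \<in> ppre \<psi> \<and>
                        snd (snd (cs!i)) (snd (ds!i)) \<psi> = Some k \<and> k > length (hcr p))
                then Unsat else Open) \<and>
           u = (\<lambda>\<chi>1 \<chi>2. if s = Open \<and> is_stardia \<chi>2 \<and> \<chi>1 \<in> ppre \<chi>2 then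
                  (case atdia_parts \<chi>1 of
                     Some (a, \<phi>) \<Rightarrow>
                       (case map_of (zip ds cs) (a, \<phi>) of
                          Some (_, _, ui) \<Rightarrow> ui \<phi> \<chi>2
                        | None \<Rightarrow> if (a, \<phi>) \<in> oldd then
                             Some (LEAST j. 0 < j \<and> j \<le> length (hcr p) \<and> hcr p ! (j - 1) = entry a \<phi>)
                           else None)
                   | None \<Rightarrow> None)
                else None))"

definition rule_step :: "pnode \<Rightarrow> cinfo list \<Rightarrow> stat \<Rightarrow> uevt \<Rightarrow> bool" where
  "rule_step p cs s u \<longleftrightarrow> rule_id p cs s u \<or> (\<exists>F. prin_rule p F cs s u) \<or> rule_ex p cs s u"

datatype tab = Tab pnode stat uevt "tab list"

fun tnode :: "tab \<Rightarrow> pnode" where "tnode (Tab p s u cs) = p"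
fun tstat :: "tab \<Rightarrow> stat" where "tstat (Tab p s u cs) = s"
fun tinfo :: "tab \<Rightarrow> cinfo" where "tinfo (Tab p s u cs) = (p, s, u)"

text \<open>A (finite) tableau in which every node, leaves included, is the premise of a rule
  application whose conclusions are exactly its children; hence no leaf admits a further
  rule application, i.e. the tableau is expanded.\<close>
inductive expanded_tableau :: "tab \<Rightarrow> bool" where
  "rule_step p (map tinfo cs) s u \<Longrightarrow> (\<forall>c\<in>set cs. expanded_tableau c) \<Longrightarrow>
   expanded_tableau (Tab p s u cs)"

end

theory Submission
  imports Defs "HOL-Library.Sublist" "HOL-Library.Countable"
begin

text \<open>The model is read off the open part of the tableau. Its worlds are the open states (nodes
  to which only the existential rule applies, on an open path); a world is labelled by all
  formulae of its prestate, the stretch of its path since the last existential step, and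
  \<open>R\<^sub>a\<close> leads from a state to the worlds below its open \<open>a\<close>-successors, including the
  successors recorded in the history \<open>HCr\<close>. The local conditions (H1)--(H5) follow from the
  shape of the rules. For (H6), following in each open node a child whose \<open>uev\<close> value does not
  grow yields a chain that either reaches the target of the eventuality or ends in an atomic
  diamond whose fulfilment was deferred to the \<open>j\<close>-th existential step of its history, with
  \<open>j\<close> bounded by the \<open>uev\<close> value. The existential rule declares a node open only if the \<open>uev\<close>
  value of each new child lies below the child's own position in the history, so deferrals
  strictly decrease and every chain is eventually completed.
  Finally, the worlds, which are tableau positions, are renamed into natural numbers.\<close>

fun tkids :: "tab \<Rightarrow> tab list" where "tkids (Tab p s u cs) = cs"
fun tuev :: "tab \<Rightarrow> uevt" where "tuev (Tab p s u cs) = u"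

lemma tinfo_conv: "tinfo t = (tnode t, tstat t, tuev t)"
  by (cases t) auto

fun subtab :: "tab \<Rightarrow> nat list \<Rightarrow> tab" where
  "subtab t [] = t"
| "subtab t (i # is) = subtab (tkids t ! i) is"

fun valid_pos :: "tab \<Rightarrow> nat list \<Rightarrow> bool" where
  "valid_pos t [] = True"
| "valid_pos t (i # is) = (i < length (tkids t) \<and> valid_pos (tkids t ! i) is)"

lemma subtab_snoc: "subtab t (is @ [i]) = tkids (subtab t is) ! i"
  by (induction "is" arbitrary: t) auto

lemma valid_pos_snoc: "valid_pos t (is @ [i]) \<longleftrightarrow> valid_pos t is \<and> i < length (tkids (subtab t is))"
  by (induction "is" arbitrary: t) auto

lemma valid_pos_take: "valid_pos t is \<Longrightarrow> valid_pos t (take n is)"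
  by (induction "is" arbitrary: t n) (auto simp: take_Cons split: nat.splits)

lemma expanded_tableau_rule_step:
  "expanded_tableau t \<Longrightarrow> rule_step (tnode t) (map tinfo (tkids t)) (tstat t) (tuev t)"
  by (cases t) (auto elim: expanded_tableau.cases)

lemma expanded_tableau_subtab:
  "expanded_tableau t \<Longrightarrow> valid_pos t is \<Longrightarrow> expanded_tableau (subtab t is)"
proof (induction "is" arbitrary: t)
  case (Cons i "is")
  then have "expanded_tableau (tkids t ! i)"
    by (cases t) (auto elim: expanded_tableau.cases)
  with Cons show ?case by simp
qed simp

lemma ppre_cases: "f \<in> ppre g \<Longrightarrow> f = g \<or> (\<exists>a h. f = Dia a h \<and> h \<in> ppre g)"
  by (induction rule: ppre.induct) auto

lemma ppre_size_le: "f \<in> ppre g \<Longrightarrow> size g \<le> size f"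
  by (induction rule: ppre.induct) auto

lemma ppre_trans: "f \<in> ppre g \<Longrightarrow> g \<in> ppre h \<Longrightarrow> f \<in> ppre h"
  by (induction rule: ppre.induct) (auto intro: ppre.intros)

lemma ppre_DiaD: "f \<in> ppre (Dia b \<psi>) \<Longrightarrow> f \<in> ppre \<psi>"
  using ppre_trans ppre.intros by blast

lemma body_notin_ppre_Dia: "\<psi> \<notin> ppre (Dia b \<psi>)"
  using ppre_size_le by fastforce

lemma ppre_Dia_is_Dia: "f \<in> ppre (Dia b g) \<Longrightarrow> \<exists>a h. f = Dia a h"
  using ppre_cases by blast

lemma ppre_Dia_body: "Dia a h \<in> ppre g \<Longrightarrow> Dia a h \<noteq> g \<Longrightarrow> h \<in> ppre g"
  using ppre_cases by fastforce

lemma leads_ppre: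
  assumes "F \<in> ppre (Dia (Star \<alpha>) \<psi>)" "K \<in> leads F"
  shows "K \<in> ppre (Dia (Star \<alpha>) \<psi>) \<or> (F = Dia (Star \<alpha>) \<psi> \<and> K = \<psi>)"
proof (cases "F = Dia (Star \<alpha>) \<psi>")
  case True
  then show ?thesis using assms by (auto intro: ppre.intros)
next
  case False
  then obtain a h where "F = Dia a h" "h \<in> ppre (Dia (Star \<alpha>) \<psi>)"
    using ppre_cases[OF assms(1)] by auto
  then show ?thesis using assms(2) by (cases a) (auto intro: ppre.intros)
qed

lemma not_atdia_parts: "\<not> is_atdia f \<Longrightarrow> atdia_parts f = None"
  unfolding is_atdia_def by (cases f rule: atdia_parts.cases) auto

lemma prin_rule_child:
  assumes "prin_rule p F cs s u" "i < length cs"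
  shows "hcr (fst (cs!i)) = hcr p" and "gam p - {F} \<subseteq> gam (fst (cs!i))"
    and "\<not> is_atdia F" "\<not> is_atbox F" "\<not> is_lit F"
    and "bb (fst (cs!i)) \<subseteq> insert F (bb p)"
    and "alpha_comps F \<subseteq> gam (fst (cs!i)) \<or> F \<in> bb p"
    and "beta_comps F = Some (b1, b2) \<Longrightarrow> b1 \<in> gam (fst (cs!i)) \<or> b2 \<in> gam (fst (cs!i))"
    and "(\<exists>a x. F = Dia a x) \<Longrightarrow> \<exists>K \<in> leads F. K \<in> gam (fst (cs!i))"
  using assms unfolding prin_rule_def Let_def
  by (elim conjE disjE exE; auto simp: lin1_def dlin_def branch_def rule_star2_def is_atdia_def
      is_atbox_def is_lit_def less_Suc_eq split: if_splits)+
lemma prin_rule_open_child: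
  "prin_rule p F cs s u \<Longrightarrow> s = Open \<Longrightarrow> \<exists>i<length cs. fst (snd (cs!i)) = Open"
  unfolding prin_rule_def Let_def
  by (auto simp: lin1_def dlin_def branch_def rule_star2_def branch_stat_def split: if_splits)

definition is_state :: "pnode \<Rightarrow> bool" where
  "is_state p \<longleftrightarrow> (\<forall>f\<in>gam p. is_atdia f \<or> is_atbox f \<or> is_lit f)"

lemma prin_rule_not_state: "prin_rule p F cs s u \<Longrightarrow> \<not> is_state p"
  unfolding prin_rule_def Let_def rule_star2_def is_state_def is_atdia_def is_atbox_def is_lit_def
  by auto

definition box_body :: "pnode \<Rightarrow> nat \<Rightarrow> fml set" where
  "box_body p a = {\<psi>. Box (AP a) \<psi> \<in> gam p}"

definition hcr_entry :: "pnode \<Rightarrow> nat \<Rightarrow> fml \<Rightarrow> fml \<times> fml set" where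
  "hcr_entry p a \<phi> = (\<phi>, insert \<phi> (box_body p a))"

lemma rule_ex_state:
  assumes "rule_ex p cs s u"
  shows "is_state p" "\<not> (Atom q \<in> gam p \<and> Neg (Atom q) \<in> gam p)"
  using assms unfolding rule_ex_def is_state_def by auto

lemma rule_ex_child:
  assumes "rule_ex p cs s u" "i < length cs"
  obtains a \<phi> where "Dia (AP a) \<phi> \<in> gam p" "gam (fst (cs!i)) = insert \<phi> (box_body p a)"
    "hcr (fst (cs!i)) = hcr p @ [hcr_entry p a \<phi>]" "bb (fst (cs!i)) = {}"
    "s = Open \<Longrightarrow> fst (snd (cs!i)) = Open"
    "\<And>\<psi> k. s = Open \<Longrightarrow> is_stardia \<psi> \<Longrightarrow> \<phi> \<in> ppre \<psi> \<Longrightarrow> snd (snd (cs!i)) \<phi> \<psi> = Some k \<Longrightarrow>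
       k \<le> length (hcr p)"
  using assms(1) unfolding rule_ex_def Let_def
  apply (elim conjE exE)
  subgoal premises d for ds
  proof -
    obtain a \<phi> where ai: "ds ! i = (a, \<phi>)" by fastforce
    have i: "i < length ds" using assms(2) d(6) by simp
    then have "(a, \<phi>) \<in> set ds" using ai nth_mem by metis
    then have dia: "Dia (AP a) \<phi> \<in> gam p" using d(5) by auto
    have kid: "fst (cs!i) = \<lparr>gam = insert \<phi> (box_body p a), hcr = hcr p @ [hcr_entry p a \<phi>],
        nx = tst \<phi>, bd = {}, bb = {}\<rparr>"
      using d(7) i ai unfolding box_body_def hcr_entry_def by auto
    have "s = Open \<Longrightarrow> fst (snd (cs!i)) = Open \<and> (\<forall>\<psi> k. is_stardia \<psi> \<and> \<phi> \<in> ppre \<psi> \<and>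
        snd (snd (cs!i)) \<phi> \<psi> = Some k \<longrightarrow> k \<le> length (hcr p))"
      using d(8) i ai by (metis not_le snd_conv stat.distinct(1))
    with dia kid show thesis by (intro that) auto
  qed
  done

lemma rule_ex_dia:
  assumes "rule_ex p cs s u" "s = Open" "Dia (AP a) \<phi> \<in> gam p"
  obtains (new) i where "i < length cs" "gam (fst (cs!i)) = insert \<phi> (box_body p a)"
      "hcr (fst (cs!i)) = hcr p @ [hcr_entry p a \<phi>]" "fst (snd (cs!i)) = Open"
      "\<And>\<chi>. is_stardia \<chi> \<Longrightarrow> Dia (AP a) \<phi> \<in> ppre \<chi> \<Longrightarrow> u (Dia (AP a) \<phi>) \<chi> = snd (snd (cs!i)) \<phi> \<chi>"
  | (old) k where "0 < k" "k \<le> length (hcr p)" "hcr p ! (k - 1) = hcr_entry p a \<phi>"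
      "\<And>\<chi>. is_stardia \<chi> \<Longrightarrow> Dia (AP a) \<phi> \<in> ppre \<chi> \<Longrightarrow> u (Dia (AP a) \<phi>) \<chi> = Some k"
  using assms(1) unfolding rule_ex_def Let_def
  apply (elim conjE exE)
  subgoal premises d for ds
  proof (cases "hcr_entry p a \<phi> \<in> set (hcr p)")
    case False
    then have "(a, \<phi>) \<in> set ds"
      using d(6) assms(3) unfolding hcr_entry_def box_body_def by auto
    then obtain i where i: "i < length ds" "ds ! i = (a, \<phi>)"
      by (auto simp: in_set_conv_nth)
    have "map_of (zip ds cs) (a, \<phi>) = Some (cs ! i)"
      using map_of_zip_nth[of ds cs i] d(5,7) i by simp
    then show thesis
      using new[of i] d(7,8,9,10) i assms(2) unfolding hcr_entry_def box_body_def
      by (auto split: prod.splits if_splits)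
  next
    case True
    then have "map_of (zip ds cs) (a, \<phi>) = None"
      using d(6,7) unfolding hcr_entry_def box_body_def by simp
    obtain j where j: "j < length (hcr p)" "hcr p ! j = hcr_entry p a \<phi>"
      using True by (metis in_set_conv_nth)
    let ?k = "LEAST j. 0 < j \<and> j \<le> length (hcr p) \<and> hcr p ! (j - 1) = hcr_entry p a \<phi>"
    have "0 < ?k \<and> ?k \<le> length (hcr p) \<and> hcr p ! (?k - 1) = hcr_entry p a \<phi>"
      by (rule LeastI[of _ "Suc j"]) (use j in auto)
    then show thesis
      using old[of ?k] d(10) \<open>map_of (zip ds cs) (a, \<phi>) = None\<close> True assms(2,3)
      unfolding hcr_entry_def box_body_def by auto
  qed
  done

text \<open>An undefined \<open>uev\<close> entry counts as \<open>0\<close>: then the eventuality is fulfilled below the node,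
  and no positive history index can be blamed for it.\<close>
fun ubound :: "nat option \<Rightarrow> nat" where
  "ubound None = 0"
| "ubound (Some k) = k"

lemma ubound_min_bot:
  "ubound (f x y) \<le> ubound (min_bot f g x y) \<or> ubound (g x y) \<le> ubound (min_bot f g x y)"
  unfolding min_bot_def by (cases "f x y"; cases "g x y") auto

lemma branch_open_child:
  assumes "branch c1 c2 t1 t2 cs s u" "s = Open"
  obtains s1 u1 s2 u2 where "cs = [(c1, s1, u1), (c2, s2, u2)]"
    "(s1 = Open \<and> ubound (t1 u1 x y) \<le> ubound (u x y)) \<or>
     (s2 = Open \<and> ubound (t2 u2 x y) \<le> ubound (u x y))"
proof -
  obtain s1 u1 s2 u2 where b: "cs = [(c1, s1, u1), (c2, s2, u2)]" "s = branch_stat s1 s2"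
    "u = branch_uev s1 s2 (t1 u1) (t2 u2)" using assms(1) unfolding branch_def by blast
  have "(s1 = Open \<and> ubound (t1 u1 x y) \<le> ubound (u x y)) \<or>
        (s2 = Open \<and> ubound (t2 u2 x y) \<le> ubound (u x y))"
  proof (cases "s1 = Open \<and> s2 = Open")
    case True
    then have "u = min_bot (t1 u1) (t2 u2)" using b(3) unfolding branch_uev_def branch_stat_def by simp
    then show ?thesis using ubound_min_bot True by metis
  next
    case False
    then show ?thesis using b(2,3) assms(2) unfolding branch_uev_def branch_stat_def
      by (auto split: if_splits)
  qed
  with b(1) show thesis by (rule that)
qed

text \<open>What the \<open>uev\<close> bookkeeping guarantees at every open node: an eventuality can be
  followed into some open child without its \<open>uev\<close> bound growing.\<close>
definition uev_progress :: "cinfo list \<Rightarrow> fml \<Rightarrow> fml \<Rightarrow> fml \<Rightarrow> uevt \<Rightarrow> fml \<Rightarrow> bool" where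
  "uev_progress cs F f \<psi> u \<chi> \<longleftrightarrow> (\<exists>i g. i < length cs \<and> fst (snd (cs!i)) = Open \<and>
     g \<in> gam (fst (cs!i)) \<and> (g = f \<or> (f = F \<and> g \<in> leads F)) \<and>
     (g = \<psi> \<or> ubound (snd (snd (cs!i)) g \<chi>) \<le> ubound (u f \<chi>)))"

lemma uev_progressI:
  "i < length cs \<Longrightarrow> cs ! i = (c, Open, ui) \<Longrightarrow> g \<in> gam c \<Longrightarrow> g = f \<or> (f = F \<and> g \<in> leads F) \<Longrightarrow>
   g = \<psi> \<or> ubound (ui g \<chi>) \<le> ubound (u f \<chi>) \<Longrightarrow> uev_progress cs F f \<psi> u \<chi>"
  unfolding uev_progress_def by force

lemma uev_progress_lin1:
  assumes "lin1 p F c cs s u" "s = Open" "f \<in> gam p" "f \<noteq> F" "gam p - {F} \<subseteq> gam c"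
  shows "uev_progress cs F f \<psi> u \<chi>"
proof -
  obtain u1 where "cs = [(c, Open, u1)]" "u = restr (gam p - {F}) u1"
    using assms(1,2) unfolding lin1_def by blast
  then show ?thesis using assms(3-5) by (intro uev_progressI[of 0 _ c _ f]) (auto simp: restr_def)
qed

lemma uev_progress_dlin:
  assumes "dlin p F N K cs s u" "s = Open" "f \<in> gam p" "K \<in> N" "K \<in> leads F"
  shows "uev_progress cs F f \<psi> u \<chi>"
proof -
  obtain u1 where l: "cs = [(p\<lparr>gam := N \<union> (gam p - {F}), nx := tst K, bd := bl K (bd p)\<rparr>, Open, u1)]"
    "u = (\<lambda>x y. if x = F then u1 K y else if x \<in> gam p - {F} then u1 x y else None)"
    using assms(1,2) unfolding dlin_def by blast
  show ?thesis
  proof (cases "f = F")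
    case True
    then show ?thesis using l assms(4,5) by (intro uev_progressI[of 0 _ _ _ K]) auto
  next
    case False
    then show ?thesis using l assms(3) by (intro uev_progressI[of 0 _ "fst (cs!0)" _ f]) auto
  qed
qed

lemma uev_progress_branch_restr:
  assumes "branch c1 c2 (restr G) (restr G) cs s u" "s = Open" "f \<in> G" "G \<subseteq> gam c1" "G \<subseteq> gam c2"
  shows "uev_progress cs F f \<psi> u \<chi>"
proof -
  obtain s1 u1 s2 u2 where b: "cs = [(c1, s1, u1), (c2, s2, u2)]"
    "(s1 = Open \<and> ubound (restr G u1 f \<chi>) \<le> ubound (u f \<chi>)) \<or>
     (s2 = Open \<and> ubound (restr G u2 f \<chi>) \<le> ubound (u f \<chi>))"
    by (rule branch_open_child[OF assms(1,2)])
  from b(2) show ?thesis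
  proof
    assume "s1 = Open \<and> ubound (restr G u1 f \<chi>) \<le> ubound (u f \<chi>)"
    then show ?thesis using b(1) assms(3,4)
      by (intro uev_progressI[of 0 _ c1 _ f]) (auto simp: restr_def)
  next
    assume "s2 = Open \<and> ubound (restr G u2 f \<chi>) \<le> ubound (u f \<chi>)"
    then show ?thesis using b(1) assms(3,5)
      by (intro uev_progressI[of 1 _ c2 _ f]) (auto simp: restr_def)
  qed
qed

text \<open>At the principal formula \<open>F\<close> the transformers \<open>t1\<close>, \<open>t2\<close> of the diamond branching rules
  read the children's \<open>uev\<close> at the successors \<open>K\<close>, \<open>K'\<close>; in the \<open>\<langle>*\<rangle>\<^sub>1\<close> rule the first
  successor may instead be the target \<open>\<psi>\<close> itself.\<close>
lemma uev_progress_branch_dia: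
  assumes "branch c1 c2 t1 t2 cs s u" "s = Open" "f \<in> gam p"
    "gam p - {F} \<subseteq> gam c1" "gam p - {F} \<subseteq> gam c2" "K \<in> gam c1" "K' \<in> gam c2"
    "K \<in> leads F" "K' \<in> leads F"
    "\<And>v. f \<noteq> F \<Longrightarrow> t1 v f \<chi> = v f \<chi>" "\<And>v. f \<noteq> F \<Longrightarrow> t2 v f \<chi> = v f \<chi>"
    "\<And>v. f = F \<Longrightarrow> K = \<psi> \<or> t1 v f \<chi> = v K \<chi>" "\<And>v. f = F \<Longrightarrow> t2 v f \<chi> = v K' \<chi>"
  shows "uev_progress cs F f \<psi> u \<chi>"
proof -
  obtain s1 u1 s2 u2 where b: "cs = [(c1, s1, u1), (c2, s2, u2)]"
    "(s1 = Open \<and> ubound (t1 u1 f \<chi>) \<le> ubound (u f \<chi>)) \<or>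
     (s2 = Open \<and> ubound (t2 u2 f \<chi>) \<le> ubound (u f \<chi>))"
    by (rule branch_open_child[OF assms(1,2)])
  show ?thesis
  proof (cases "f = F")
    case False
    then have "f \<in> gam c1" "f \<in> gam c2" using assms(3-5) by blast+
    with b False assms(10,11) show ?thesis
      by (elim disjE; intro uev_progressI[of 0 _ c1 _ f] uev_progressI[of 1 _ c2 _ f]) auto
  next
    case True
    from b(2) show ?thesis
    proof
      assume "s1 = Open \<and> ubound (t1 u1 f \<chi>) \<le> ubound (u f \<chi>)"
      then show ?thesis using b(1) assms(6,8) assms(12)[OF True, of u1] True
        by (intro uev_progressI[of 0 _ c1 _ K]) auto
    next
      assume "s2 = Open \<and> ubound (t2 u2 f \<chi>) \<le> ubound (u f \<chi>)"
      then show ?thesis using b(1) assms(7,9) assms(13)[OF True, of u2] True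
        by (intro uev_progressI[of 1 _ c2 _ K']) auto
    qed
  qed
qed

lemma uev_progress_dia_choice:
  assumes "branch (p\<lparr>gam := {Dia a1 x} \<union> (gam p - {F}), nx := tst (Dia a1 x), bd := bl (Dia a1 x) (bd p)\<rparr>)
      (p\<lparr>gam := {Dia a2 x} \<union> (gam p - {F}), nx := tst (Dia a2 x), bd := bl (Dia a2 x) (bd p)\<rparr>)
      (\<lambda>u1 c1 c2. if c1 = F then u1 (Dia a1 x) c2 else if c1 \<in> gam p - {F} then u1 c1 c2 else None)
      (\<lambda>u2 c1 c2. if c1 = F then u2 (Dia a2 x) c2 else if c1 \<in> gam p - {F} then u2 c1 c2 else None)
      cs s u"
    "s = Open" "f \<in> gam p" "F = Dia (Choice a1 a2) x"
  shows "uev_progress cs F f \<psi> u \<chi>"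
  by (rule uev_progress_branch_dia[where K = "Dia a1 x" and K' = "Dia a2 x", OF assms(1-3)]) (use assms(3,4) in auto)

lemma uev_progress_dia_star:
  assumes "branch (p\<lparr>gam := {x} \<union> (gam p - {F}), nx := tst x, bd := bl x (insert F (bd p))\<rparr>)
      (p\<lparr>gam := {Dia a F} \<union> (gam p - {F}), nx := tst (Dia a F), bd := bl (Dia a F) (insert F (bd p))\<rparr>)
      (\<lambda>u1 c1 c2. if c1 = F \<and> c2 = F then None else if c1 = F then u1 x c2
                  else if c1 \<in> gam p - {F} then u1 c1 c2 else None)
      (\<lambda>u2 c1 c2. if c1 = F then u2 (Dia a F) c2 else if c1 \<in> gam p - {F} then u2 c1 c2 else None)
      cs s u"
    "s = Open" "f \<in> gam p" "F = Dia (Star a) x" "\<chi> = Dia (Star \<alpha>) \<psi>"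
  shows "uev_progress cs F f \<psi> u \<chi>"
  by (rule uev_progress_branch_dia[where K = x and K' = "Dia a F", OF assms(1-3)]) (use assms(3-5) in auto)

lemma prin_rule_uev_progress:
  assumes "prin_rule p F cs s u" "s = Open" "f \<in> gam p" "f \<in> ppre (Dia (Star \<alpha>) \<psi>)"
  shows "uev_progress cs F f \<psi> u (Dia (Star \<alpha>) \<psi>)"
proof -
  obtain a0 h0 where "f = Dia a0 h0" using ppre_Dia_is_Dia[OF assms(4)] by blast
  moreover have "f \<noteq> F \<Longrightarrow> f \<in> gam p - {F}" using assms(3) by blast
  ultimately show ?thesis using assms(1) unfolding prin_rule_def Let_def
    by (elim conjE disjE exE)
      (erule uev_progress_lin1[OF _ assms(2,3)] uev_progress_dlin[OF _ assms(2,3)]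
        uev_progress_branch_restr[OF _ assms(2)] uev_progress_dia_choice[OF _ assms(2,3)]
        uev_progress_dia_star[OF _ assms(2,3)]; auto
       | simp add: rule_star2_def assms(2))+
qed

section \<open>Chains towards an eventuality\<close>

definition chain_entry :: "'w set \<Rightarrow> ('w \<Rightarrow> fml set) \<Rightarrow> fml \<Rightarrow> 'w \<times> fml \<Rightarrow> bool" where
  "chain_entry W L \<psi> x \<longleftrightarrow> fst x \<in> W \<and> snd x \<in> ppre \<psi> \<and> snd x \<in> L (fst x)"

definition chain_link :: "(nat \<Rightarrow> ('w \<times> 'w) set) \<Rightarrow> 'w \<times> fml \<Rightarrow> 'w \<times> fml \<Rightarrow> bool" where
  "chain_link R x y \<longleftrightarrow> (case atdia_parts (snd x) of
       Some (a, \<chi>) \<Rightarrow> snd y = \<chi> \<and> (fst x, fst y) \<in> R a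
     | None \<Rightarrow> snd y \<in> leads (snd x) \<and> fst x = fst y)"

text \<open>A fulfilling chain without the conditions on its two ends.\<close>
fun chain :: "'w set \<Rightarrow> (nat \<Rightarrow> ('w \<times> 'w) set) \<Rightarrow> ('w \<Rightarrow> fml set) \<Rightarrow> fml \<Rightarrow> ('w \<times> fml) list \<Rightarrow> bool" where
  "chain W R L \<psi> [] = False"
| "chain W R L \<psi> [x] = chain_entry W L \<psi> x"
| "chain W R L \<psi> (x # y # c) =
     (chain_entry W L \<psi> x \<and> snd x \<noteq> \<psi> \<and> chain_link R x y \<and> chain W R L \<psi> (y # c))"

lemma chain_not_Nil: "chain W R L \<psi> c \<Longrightarrow> c \<noteq> []"
  by (cases c) auto

lemma chain_hd: "chain W R L \<psi> c \<Longrightarrow> chain_entry W L \<psi> (hd c)"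
  by (cases c; cases "tl c") auto

lemma chain_Cons:
  "chain W R L \<psi> c \<Longrightarrow> chain_entry W L \<psi> x \<Longrightarrow> snd x \<noteq> \<psi> \<Longrightarrow> chain_link R x (hd c) \<Longrightarrow>
   chain W R L \<psi> (x # c)"
  by (cases c) auto

lemma chain_Cons_leads:
  "chain W R L \<psi> c \<Longrightarrow> hd c = (w, g) \<Longrightarrow> g \<in> leads f \<Longrightarrow> \<not> is_atdia f \<Longrightarrow>
   chain_entry W L \<psi> (w, f) \<Longrightarrow> f \<noteq> \<psi> \<Longrightarrow> chain W R L \<psi> ((w, f) # c)"
  by (rule chain_Cons) (auto simp: chain_link_def not_atdia_parts)

lemma chain_Cons_dia:
  "chain W R L \<psi> c \<Longrightarrow> hd c = (v, \<phi>) \<Longrightarrow> (w, v) \<in> R a \<Longrightarrow>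
   chain_entry W L \<psi> (w, Dia (AP a) \<phi>) \<Longrightarrow> Dia (AP a) \<phi> \<noteq> \<psi> \<Longrightarrow> chain W R L \<psi> ((w, Dia (AP a) \<phi>) # c)"
  by (rule chain_Cons) (auto simp: chain_link_def)

lemma chain_append:
  "chain W R L \<psi> c1 \<Longrightarrow> chain W R L \<psi> c2 \<Longrightarrow> last c1 = hd c2 \<Longrightarrow> chain W R L \<psi> (butlast c1 @ c2)"
proof (induction c1 rule: chain.induct)
  case (2 W R L \<psi> x)
  then show ?case by (cases c2) auto
next
  case (3 W R L \<psi> x y c)
  then show ?case by (cases c) (auto intro: chain_Cons)
qed simp

lemma hd_butlast_append: "c1 \<noteq> [] \<Longrightarrow> last c1 = hd c2 \<Longrightarrow> hd (butlast c1 @ c2) = hd c1"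
  by (cases c1 rule: rev_cases) (auto simp: hd_append)

lemma chain_append_last:
  assumes "chain W R L \<psi> c1" "chain W R L \<psi> c2" "last c1 = hd c2"
  shows "\<exists>c. chain W R L \<psi> c \<and> hd c = hd c1 \<and> last c = last c2"
  using chain_append[OF assms] hd_butlast_append[OF chain_not_Nil[OF assms(1)] assms(3)]
    chain_not_Nil[OF assms(2)] by auto

lemma chain_nth:
  "chain W R L \<psi> c \<Longrightarrow> (\<forall>i<length c. chain_entry W L \<psi> (c!i)) \<and> (\<forall>i. i < length c - 1 \<longrightarrow> snd (c!i) \<noteq> \<psi>) \<and>
     (\<forall>i. Suc i < length c \<longrightarrow> chain_link R (c!i) (c!Suc i))"
proof (induction c rule: chain.induct)
  case (3 W R L \<psi> x y c)
  then show ?case by (auto simp: nth_Cons split: nat.splits)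
qed auto

lemma fulfilling_chainI:
  assumes "chain W R L \<psi> c" "hd c = (w, Dia \<beta> \<psi>)" "snd (last c) = \<psi>"
  shows "fulfilling_chain W R L \<psi> \<beta> w c"
proof -
  have "c \<noteq> []" using chain_not_Nil assms(1) by blast
  with assms chain_nth[OF assms(1)] show ?thesis
    unfolding fulfilling_chain_def chain_entry_def chain_link_def by (simp add: hd_conv_nth)
qed

lemma prefix_nth: "prefix xs ys \<Longrightarrow> i < length xs \<Longrightarrow> ys ! i = xs ! i"
  unfolding prefix_def by (auto simp: nth_append)

section \<open>The model of an open expanded tableau\<close>

locale open_tableau =
  fixes T :: tab and \<phi>0 :: fml
  assumes expanded: "expanded_tableau T"
    and root: "tnode T = \<lparr>gam = {\<phi>0}, hcr = [], nx = None, bd = {}, bb = {}\<rparr>"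
    and root_open: "tstat T = Open"
begin

definition node_at :: "nat list \<Rightarrow> pnode" where "node_at \<pi> = tnode (subtab T \<pi>)"
definition stat_at :: "nat list \<Rightarrow> stat" where "stat_at \<pi> = tstat (subtab T \<pi>)"
definition uev_at :: "nat list \<Rightarrow> uevt" where "uev_at \<pi> = tuev (subtab T \<pi>)"
definition kids_at :: "nat list \<Rightarrow> cinfo list" where "kids_at \<pi> = map tinfo (tkids (subtab T \<pi>))"
definition hlen :: "nat list \<Rightarrow> nat" where "hlen \<pi> = length (hcr (node_at \<pi>))"

abbreviation prin_at :: "nat list \<Rightarrow> fml \<Rightarrow> bool" where
  "prin_at \<pi> F \<equiv> prin_rule (node_at \<pi>) F (kids_at \<pi>) (stat_at \<pi>) (uev_at \<pi>)"

abbreviation ex_at :: "nat list \<Rightarrow> bool" where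
  "ex_at \<pi> \<equiv> rule_ex (node_at \<pi>) (kids_at \<pi>) (stat_at \<pi>) (uev_at \<pi>)"

lemma rule_step_at: "valid_pos T \<pi> \<Longrightarrow> rule_step (node_at \<pi>) (kids_at \<pi>) (stat_at \<pi>) (uev_at \<pi>)"
  unfolding node_at_def kids_at_def stat_at_def uev_at_def
  using expanded_tableau_rule_step expanded_tableau_subtab expanded by blast

lemma kids_at_nth:
  "i < length (kids_at \<pi>) \<Longrightarrow> kids_at \<pi> ! i = (node_at (\<pi>@[i]), stat_at (\<pi>@[i]), uev_at (\<pi>@[i]))"
  unfolding node_at_def kids_at_def stat_at_def uev_at_def by (simp add: subtab_snoc tinfo_conv)

lemma valid_pos_child: "valid_pos T (\<pi>@[i]) \<longleftrightarrow> valid_pos T \<pi> \<and> i < length (kids_at \<pi>)"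
  unfolding kids_at_def by (simp add: valid_pos_snoc)

lemma subtab_child_mem: "i < length (kids_at \<pi>) \<Longrightarrow> subtab T (\<pi>@[i]) \<in> set (tkids (subtab T \<pi>))"
  unfolding kids_at_def by (simp add: subtab_snoc)

lemma hlen_root: "hlen [] = 0"
  unfolding hlen_def node_at_def using root by simp

lemma child_step_cases:
  assumes "valid_pos T (\<pi>@[i])"
  obtains (prin) F where "prin_at \<pi> F" "hcr (node_at (\<pi>@[i])) = hcr (node_at \<pi>)"
  | (ex) e where "ex_at \<pi>" "hcr (node_at (\<pi>@[i])) = hcr (node_at \<pi>) @ [e]"
proof -
  have v: "valid_pos T \<pi>" "i < length (kids_at \<pi>)" using assms valid_pos_child by auto
  have ki: "fst (kids_at \<pi> ! i) = node_at (\<pi>@[i])" using kids_at_nth[OF v(2)] by simp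
  from rule_step_at[OF v(1)] show thesis unfolding rule_step_def
  proof (elim disjE exE)
    assume "rule_id (node_at \<pi>) (kids_at \<pi>) (stat_at \<pi>) (uev_at \<pi>)"
    then show thesis using v(2) by (simp add: rule_id_def)
  next
    fix F assume pr: "prin_at \<pi> F"
    have "hcr (node_at (\<pi>@[i])) = hcr (node_at \<pi>)" using prin_rule_child(1)[OF pr v(2)] ki by simp
    with pr show thesis by (rule prin)
  next
    assume ex: "ex_at \<pi>"
    then show thesis using rule_ex_child[OF ex v(2)] ki that(2) by metis
  qed
qed

lemma step_along:
  assumes "valid_pos T w" "n < length w"
  obtains (prin) F where "prin_at (take n w) F" "hcr (node_at (take (Suc n) w)) = hcr (node_at (take n w))"
  | (ex) e where "ex_at (take n w)" "hcr (node_at (take (Suc n) w)) = hcr (node_at (take n w)) @ [e]"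
proof -
  have "valid_pos T (take n w @ [w!n])" using assms valid_pos_take take_Suc_conv_app_nth by metis
  then show thesis using child_step_cases that take_Suc_conv_app_nth[OF assms(2)] by metis
qed

lemma child_along:
  assumes "valid_pos T w" "n < length w"
  shows "w!n < length (kids_at (take n w))"
    "kids_at (take n w) ! (w!n) = (node_at (take (Suc n) w), stat_at (take (Suc n) w), uev_at (take (Suc n) w))"
proof -
  have "valid_pos T (take n w @ [w!n])" using assms valid_pos_take take_Suc_conv_app_nth by metis
  then show "w!n < length (kids_at (take n w))" using valid_pos_child by blast
  then show "kids_at (take n w) ! (w!n) = (node_at (take (Suc n) w), stat_at (take (Suc n) w), uev_at (take (Suc n) w))"
    using kids_at_nth take_Suc_conv_app_nth[OF assms(2)] by simp
qed

lemma hcr_prefix_along: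
  assumes "valid_pos T w" "m \<le> n" "n \<le> length w"
  shows "prefix (hcr (node_at (take m w))) (hcr (node_at (take n w)))"
  using assms(2,3)
proof (induction n)
  case (Suc n)
  show ?case
  proof (cases "m = Suc n")
    case False
    then have "prefix (hcr (node_at (take m w))) (hcr (node_at (take n w)))" using Suc by simp
    moreover have "prefix (hcr (node_at (take n w))) (hcr (node_at (take (Suc n) w)))"
      by (rule step_along[OF assms(1), of n]) (use Suc.prems in auto)
    ultimately show ?thesis using prefix_order.trans by blast
  qed simp
qed simp

lemma hlen_mono: "valid_pos T w \<Longrightarrow> m \<le> n \<Longrightarrow> n \<le> length w \<Longrightarrow> hlen (take m w) \<le> hlen (take n w)"
  unfolding hlen_def using hcr_prefix_along prefix_length_le by blast

lemma hlen_step_along: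
  assumes "valid_pos T w" "n < length w"
  shows "hlen (take (Suc n) w) = hlen (take n w) \<and> (\<exists>F. prin_at (take n w) F)
    \<or> hlen (take (Suc n) w) = Suc (hlen (take n w)) \<and> ex_at (take n w)"
  by (rule step_along[OF assms]) (auto simp: hlen_def)

lemma hlen_reaches_along:
  assumes "valid_pos T w" "0 < k" "k \<le> hlen (take n w)" "n \<le> length w"
  shows "\<exists>m<n. hlen (take m w) = k - 1 \<and> hlen (take (Suc m) w) = k"
  using assms(3,4)
proof (induction n)
  case 0 then show ?case using hlen_root assms(2) by simp
next
  case (Suc n)
  show ?case
  proof (cases "k \<le> hlen (take n w)")
    case True then show ?thesis using Suc less_Suc_eq by force
  next
    case False
    then have "hlen (take (Suc n) w) = Suc (hlen (take n w))" "k = hlen (take (Suc n) w)"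
      using hlen_step_along[OF assms(1), of n] Suc.prems by auto
    then show ?thesis by (intro exI[of _ n]) auto
  qed
qed

definition open_pos :: "nat list \<Rightarrow> bool" where
  "open_pos \<pi> \<longleftrightarrow> valid_pos T \<pi> \<and> (\<forall>n\<le>length \<pi>. stat_at (take n \<pi>) = Open)"

lemma open_pos_root: "open_pos []"
  unfolding open_pos_def stat_at_def using root_open by simp

lemma open_pos_take: "open_pos w \<Longrightarrow> open_pos (take n w)"
  unfolding open_pos_def using valid_pos_take by (auto simp: min_def)

lemma open_pos_valid: "open_pos w \<Longrightarrow> valid_pos T w"
  unfolding open_pos_def by blast

lemma open_pos_stat: "open_pos w \<Longrightarrow> stat_at w = Open"
  unfolding open_pos_def by (metis order_refl take_all)

lemma open_pos_child:
  "open_pos \<pi> \<Longrightarrow> i < length (kids_at \<pi>) \<Longrightarrow> stat_at (\<pi>@[i]) = Open \<Longrightarrow> open_pos (\<pi>@[i])"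
  unfolding open_pos_def using valid_pos_child by (auto simp: le_Suc_eq)

lemma hlen_prin_child: "prin_at \<pi> F \<Longrightarrow> i < length (kids_at \<pi>) \<Longrightarrow> hlen (\<pi>@[i]) = hlen \<pi>"
  using prin_rule_child(1) kids_at_nth unfolding hlen_def by fastforce

lemma open_node_cases:
  assumes "open_pos \<pi>"
  obtains (state) "is_state (node_at \<pi>)" "ex_at \<pi>"
  | (prin) F i where "\<not> is_state (node_at \<pi>)" "prin_at \<pi> F" "i < length (kids_at \<pi>)"
      "open_pos (\<pi>@[i])" "hlen (\<pi>@[i]) = hlen \<pi>"
proof -
  have v: "valid_pos T \<pi>" and o: "stat_at \<pi> = Open"
    using assms open_pos_valid open_pos_stat by auto
  from rule_step_at[OF v] show thesis unfolding rule_step_def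
  proof (elim disjE exE)
    assume "rule_id (node_at \<pi>) (kids_at \<pi>) (stat_at \<pi>) (uev_at \<pi>)"
    then show thesis using o by (simp add: rule_id_def)
  next
    fix F assume pr: "prin_at \<pi> F"
    obtain i where i: "i < length (kids_at \<pi>)" "fst (snd (kids_at \<pi> ! i)) = Open"
      using prin_rule_open_child[OF pr o] by blast
    then show thesis using prin[OF prin_rule_not_state[OF pr] pr i(1)] open_pos_child[OF assms i(1)]
        hlen_prin_child[OF pr i(1)] i(2) kids_at_nth[OF i(1)] by simp
  next
    assume "ex_at \<pi>"
    then show thesis using state rule_ex_state by blast
  qed
qed

definition W :: "nat list set" where
  "W = {\<pi>. open_pos \<pi> \<and> is_state (node_at \<pi>)}"

text \<open>The prestate of a world is the part of its path with the same history length.\<close>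
definition L :: "nat list \<Rightarrow> fml set" where
  "L w = \<Union>{gam (node_at (take n w)) | n. n \<le> length w \<and> hlen (take n w) = hlen w}"

definition R :: "nat \<Rightarrow> (nat list \<times> nat list) set" where
  "R a = {(v, w). v \<in> W \<and> w \<in> W \<and> box_body (node_at v) a \<subseteq> L w}"

lemma in_LI: "n \<le> length w \<Longrightarrow> hlen (take n w) = hlen w \<Longrightarrow> f \<in> gam (node_at (take n w)) \<Longrightarrow> f \<in> L w"
  unfolding L_def by blast

lemma in_LE: "f \<in> L w \<Longrightarrow> \<exists>n\<le>length w. hlen (take n w) = hlen w \<and> f \<in> gam (node_at (take n w))"
  unfolding L_def by blast

lemma gam_subset_L: "gam (node_at w) \<subseteq> L w"
  using in_LI[of "length w" w] by auto

lemma gam_subset_L_below: "hlen (r @ ext) = hlen r \<Longrightarrow> gam (node_at r) \<subseteq> L (r @ ext)"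
  using in_LI[of "length r" "r @ ext"] by auto

lemma world_valid_pos: "w \<in> W \<Longrightarrow> valid_pos T w"
  unfolding W_def open_pos_def by blast

lemma world_rule_ex: "w \<in> W \<Longrightarrow> ex_at w \<and> stat_at w = Open"
  unfolding W_def by (metis (mono_tags) mem_Collect_eq open_node_cases open_pos_stat)

lemma world_below_aux:
  "subtab T \<pi> = t \<Longrightarrow> open_pos \<pi> \<Longrightarrow> \<exists>ext. \<pi> @ ext \<in> W \<and> hlen (\<pi> @ ext) = hlen \<pi>"
proof (induction t arbitrary: \<pi>)
  case (Tab p s u cs)
  from Tab.prems(2) show ?case
  proof (cases rule: open_node_cases)
    case state
    then show ?thesis using Tab.prems(2) unfolding W_def by (intro exI[of _ "[]"]) auto
  next
    case (prin F i)
    have "subtab T (\<pi>@[i]) \<in> set cs" using subtab_child_mem[OF prin(3)] Tab.prems(1) by simp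
    then obtain ext where "\<pi>@[i]@ext \<in> W" "hlen (\<pi>@[i]@ext) = hlen (\<pi>@[i])"
      using Tab.IH prin(4) by fastforce
    then show ?thesis using prin(5) by (intro exI[of _ "[i]@ext"]) auto
  qed
qed

lemma world_below: "open_pos \<pi> \<Longrightarrow> \<exists>ext. \<pi> @ ext \<in> W \<and> hlen (\<pi> @ ext) = hlen \<pi>"
  using world_below_aux by blast

lemma prin_rule_along_child:
  assumes "valid_pos T w" "n < length w" "prin_at (take n w) F"
  shows "gam (node_at (take n w)) - {F} \<subseteq> gam (node_at (take (Suc n) w))"
    and "\<not> is_atdia F" "\<not> is_atbox F" "\<not> is_lit F"
    and "bb (node_at (take (Suc n) w)) \<subseteq> insert F (bb (node_at (take n w)))"
    and "alpha_comps F \<subseteq> gam (node_at (take (Suc n) w)) \<or> F \<in> bb (node_at (take n w))"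
    and "beta_comps F = Some (b1, b2) \<Longrightarrow>
       b1 \<in> gam (node_at (take (Suc n) w)) \<or> b2 \<in> gam (node_at (take (Suc n) w))"
    and "(\<exists>a x. F = Dia a x) \<Longrightarrow> \<exists>K \<in> leads F. K \<in> gam (node_at (take (Suc n) w))"
  using prin_rule_child[OF assms(3) child_along(1)[OF assms(1,2)]] child_along(2)[OF assms(1,2)]
  by auto

lemma rule_ex_along_child:
  assumes "valid_pos T w" "n < length w" "ex_at (take n w)"
  obtains a \<phi> where "Dia (AP a) \<phi> \<in> gam (node_at (take n w))"
    "gam (node_at (take (Suc n) w)) = insert \<phi> (box_body (node_at (take n w)) a)"
    "hcr (node_at (take (Suc n) w)) = hcr (node_at (take n w)) @ [hcr_entry (node_at (take n w)) a \<phi>]"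
    "bb (node_at (take (Suc n) w)) = {}"
    "\<And>\<psi> k. stat_at (take n w) = Open \<Longrightarrow> is_stardia \<psi> \<Longrightarrow> \<phi> \<in> ppre \<psi> \<Longrightarrow>
       uev_at (take (Suc n) w) \<phi> \<psi> = Some k \<Longrightarrow> k \<le> hlen (take n w)"
  by (rule rule_ex_child[OF assms(3) child_along(1)[OF assms(1,2)]])
    (rule that; use child_along(2)[OF assms(1,2)] in \<open>auto simp: hlen_def\<close>)

lemma removed_by_prin_rule:
  assumes "valid_pos T w" "m \<le> n" "n \<le> length w" "hlen (take m w) = hlen (take n w)"
    "f \<in> gam (node_at (take m w))" "f \<notin> gam (node_at (take n w))"
  shows "\<exists>k. m \<le> k \<and> k < n \<and> hlen (take k w) = hlen (take n w) \<and>
      hlen (take (Suc k) w) = hlen (take n w) \<and> prin_at (take k w) f"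
  using assms(2-6)
proof (induction n)
  case (Suc n)
  have mn: "m \<le> n" using Suc by (metis le_SucE)
  have "hlen (take m w) \<le> hlen (take n w)" "hlen (take n w) \<le> hlen (take (Suc n) w)"
    using hlen_mono[OF assms(1), of m n] hlen_mono[OF assms(1), of n "Suc n"] Suc.prems mn by auto
  then have eq: "hlen (take n w) = hlen (take m w)" "hlen (take (Suc n) w) = hlen (take n w)"
    using Suc.prems by auto
  show ?case
  proof (cases "f \<in> gam (node_at (take n w))")
    case False
    then show ?thesis using Suc.IH[OF mn] Suc.prems eq less_Suc_eq by fastforce
  next
    case True
    have nl: "n < length w" using Suc.prems by simp
    obtain F where pr: "prin_at (take n w) F"
      using hlen_step_along[OF assms(1) nl] eq(2) by auto
    have "f = F" using prin_rule_along_child(1)[OF assms(1) nl pr] True Suc.prems by blast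
    then show ?thesis using pr eq mn by (intro exI[of _ n]) auto
  qed
qed simp

lemma world_principal:
  assumes "w \<in> W" "f \<in> L w" "\<not> (is_atdia f \<or> is_atbox f \<or> is_lit f)"
  obtains k where "k < length w" "hlen (take k w) = hlen w" "hlen (take (Suc k) w) = hlen w"
    "prin_at (take k w) f"
proof -
  obtain n where n: "n \<le> length w" "hlen (take n w) = hlen w" "f \<in> gam (node_at (take n w))"
    using in_LE[OF assms(2)] by blast
  have "f \<notin> gam (node_at (take (length w) w))"
    using assms(1,3) unfolding W_def is_state_def by auto
  from removed_by_prin_rule[OF world_valid_pos[OF assms(1)] n(1) order_refl _ n(3) this] n(2)
  show thesis using that by force
qed

lemma world_elementary:
  assumes "w \<in> W" "f \<in> L w" "is_atdia f \<or> is_atbox f \<or> is_lit f"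
  shows "f \<in> gam (node_at w)"
proof (rule ccontr)
  assume "f \<notin> gam (node_at w)"
  obtain n where n: "n \<le> length w" "hlen (take n w) = hlen w" "f \<in> gam (node_at (take n w))"
    using in_LE[OF assms(2)] by blast
  have v: "valid_pos T w" using world_valid_pos[OF assms(1)] .
  obtain k where "k < length w" "prin_at (take k w) f"
    using removed_by_prin_rule[OF v n(1) order_refl _ n(3)] n(2) \<open>f \<notin> gam (node_at w)\<close> by force
  then show False using prin_rule_along_child(2-4)[OF v] assms(3) by blast
qed

lemma L_no_clash: "w \<in> W \<Longrightarrow> Neg (Atom p) \<in> L w \<Longrightarrow> Atom p \<notin> L w"
  using world_elementary world_rule_ex rule_ex_state(2) unfolding is_lit_def by blast

text \<open>A box-star formula in \<open>BB\<close> was unfolded earlier in the same prestate.\<close>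
lemma bb_alpha_comps:
  assumes "valid_pos T w"
  shows "n \<le> length w \<Longrightarrow> hlen (take n w) = hlen w \<Longrightarrow> F \<in> bb (node_at (take n w)) \<Longrightarrow>
    alpha_comps F \<subseteq> L w"
proof (induction n arbitrary: F)
  case 0 then show ?case using root by (simp add: node_at_def)
next
  case (Suc n)
  have nl: "n < length w" using Suc.prems by simp
  have "hlen (take n w) \<le> hlen (take (Suc n) w)" "hlen (take (Suc n) w) \<le> hlen w"
    using hlen_mono[OF assms, of n "Suc n"] hlen_mono[OF assms, of "Suc n" "length w"] Suc.prems
    by auto
  with hlen_step_along[OF assms nl] Suc.prems(2) consider
    (prin) G where "hlen (take n w) = hlen w" "prin_at (take n w) G" | (ex) "ex_at (take n w)"
    by force
  then show ?case
  proof cases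
    case (prin G)
    note child = prin_rule_along_child[OF assms nl prin(2)]
    have "gam (node_at (take (Suc n) w)) \<subseteq> L w" using in_LI Suc.prems(1,2) by blast
    then show ?thesis using Suc.IH[OF _ prin(1)] Suc.prems(3) child(5,6) nl by fastforce
  next
    case ex
    then obtain a \<phi> where "Dia (AP a) \<phi> \<in> gam (node_at (take n w))" "bb (node_at (take (Suc n) w)) = {}"
      by (rule rule_ex_along_child[OF assms nl])
    then show ?thesis using Suc.prems(3) by simp
  qed
qed

lemma L_alpha:
  assumes "w \<in> W" "f \<in> L w"
  shows "alpha_comps f \<subseteq> L w"
proof (cases "is_atdia f \<or> is_atbox f \<or> is_lit f")
  case True
  then show ?thesis unfolding is_atdia_def is_atbox_def is_lit_def by auto
next
  case False
  have v: "valid_pos T w" using world_valid_pos[OF assms(1)] .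
  obtain k where k: "k < length w" "hlen (take k w) = hlen w" "hlen (take (Suc k) w) = hlen w"
    "prin_at (take k w) f"
    using world_principal[OF assms False] .
  have "gam (node_at (take (Suc k) w)) \<subseteq> L w" using in_LI k(1,3) by (metis Suc_leI subsetI)
  then show ?thesis
    using prin_rule_along_child(6)[OF v k(1,4)] bb_alpha_comps[OF v _ k(2)] k(1) by fastforce
qed

lemma L_beta:
  assumes "w \<in> W" "f \<in> L w" "beta_comps f = Some (b1, b2)"
  shows "b1 \<in> L w \<or> b2 \<in> L w"
proof (cases "is_atdia f \<or> is_atbox f \<or> is_lit f")
  case True
  then show ?thesis using assms(3) unfolding is_atdia_def is_atbox_def is_lit_def by auto
next
  case False
  have v: "valid_pos T w" using world_valid_pos[OF assms(1)] .
  obtain k where k: "k < length w" "hlen (take k w) = hlen w" "hlen (take (Suc k) w) = hlen w"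
    "prin_at (take k w) f"
    using world_principal[OF assms(1,2) False] .
  have "gam (node_at (take (Suc k) w)) \<subseteq> L w" using in_LI k(1,3) by (metis Suc_leI subsetI)
  then show ?thesis using prin_rule_along_child(7)[OF v k(1,4) assms(3)] by blast
qed

lemma L_box:
  assumes "w \<in> W" "Box (AP a) \<psi> \<in> L w" "(w, v) \<in> R a"
  shows "\<psi> \<in> L v"
proof -
  have "Box (AP a) \<psi> \<in> gam (node_at w)" using world_elementary[OF assms(1,2)] by (simp add: is_atbox_def)
  then show ?thesis using assms(3) unfolding R_def box_body_def by blast
qed

lemma hcr_entry_origin:
  assumes "open_pos w" "0 < k" "k \<le> hlen w" "hcr (node_at w) ! (k - 1) = (\<phi>, S)"
  obtains m where "m < length w" "gam (node_at (take (Suc m) w)) = S"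
    "\<And>\<psi> k'. is_stardia \<psi> \<Longrightarrow> \<phi> \<in> ppre \<psi> \<Longrightarrow> uev_at (take (Suc m) w) \<phi> \<psi> = Some k' \<Longrightarrow> k' \<le> k - 1"
proof -
  have v: "valid_pos T w" using open_pos_valid[OF assms(1)] .
  obtain m where m: "m < length w" "hlen (take m w) = k - 1" "hlen (take (Suc m) w) = k"
    using hlen_reaches_along[OF v assms(2), of "length w"] assms(3) by auto
  have ex: "ex_at (take m w)" using hlen_step_along[OF v m(1)] m(2,3) assms(2) by auto
  obtain a \<phi>' where e: "gam (node_at (take (Suc m) w)) = insert \<phi>' (box_body (node_at (take m w)) a)"
     "hcr (node_at (take (Suc m) w)) = hcr (node_at (take m w)) @ [hcr_entry (node_at (take m w)) a \<phi>']"
     "\<And>\<psi> k. is_stardia \<psi> \<Longrightarrow> \<phi>' \<in> ppre \<psi> \<Longrightarrow> uev_at (take (Suc m) w) \<phi>' \<psi> = Some k \<Longrightarrow>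
        k \<le> hlen (take m w)"
    using rule_ex_along_child[OF v m(1) ex] open_pos_stat[OF open_pos_take[OF assms(1)]] by metis
  have "prefix (hcr (node_at (take (Suc m) w))) (hcr (node_at w))"
    using hcr_prefix_along[OF v, of "Suc m" "length w"] m(1) by simp
  moreover have "k - 1 < length (hcr (node_at (take (Suc m) w)))"
    using m(3) assms(2) unfolding hlen_def by simp
  ultimately have "hcr (node_at w) ! (k - 1) = hcr (node_at (take (Suc m) w)) ! (k - 1)"
    by (rule prefix_nth)
  also have "\<dots> = hcr_entry (node_at (take m w)) a \<phi>'"
    using e(2) m(2) unfolding hlen_def by (simp add: nth_append)
  finally have "\<phi>' = \<phi>" "S = insert \<phi>' (box_body (node_at (take m w)) a)"
    using assms(4) unfolding hcr_entry_def by auto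
  then show thesis using that m e(1,3) by auto
qed

lemma R_to_world_below:
  assumes "w \<in> W" "gam (node_at r) = insert \<phi> (box_body (node_at w) a)"
    "r @ ext \<in> W" "hlen (r @ ext) = hlen r"
  shows "(w, r @ ext) \<in> R a" "\<phi> \<in> L (r @ ext)"
  using gam_subset_L_below[OF assms(4)] assms unfolding R_def by auto

lemma L_dia:
  assumes "w \<in> W" "Dia (AP a) \<psi> \<in> L w"
  shows "\<exists>v. (w, v) \<in> R a \<and> \<psi> \<in> L v"
proof -
  have dia: "Dia (AP a) \<psi> \<in> gam (node_at w)"
    using world_elementary[OF assms] by (simp add: is_atdia_def)
  have ow: "open_pos w" using assms(1) unfolding W_def by blast
  have "\<exists>r. open_pos r \<and> gam (node_at r) = insert \<psi> (box_body (node_at w) a)"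
    using world_rule_ex[OF assms(1)]
  proof (elim conjE rule_ex_dia[OF _ _ dia])
    fix i assume i: "i < length (kids_at w)"
      "gam (fst (kids_at w ! i)) = insert \<psi> (box_body (node_at w) a)" "fst (snd (kids_at w ! i)) = Open"
    then show ?thesis using open_pos_child[OF ow i(1)] kids_at_nth[OF i(1)] by auto
  next
    fix k assume k: "0 < k" "k \<le> length (hcr (node_at w))" "hcr (node_at w) ! (k - 1) = hcr_entry (node_at w) a \<psi>"
    obtain m where "m < length w" "gam (node_at (take (Suc m) w)) = insert \<psi> (box_body (node_at w) a)"
      by (rule hcr_entry_origin[OF ow k(1) _ k(3)[unfolded hcr_entry_def]]) (use k(2) in \<open>simp add: hlen_def\<close>)
    then show ?thesis using open_pos_take[OF ow] by blast
  qed
  then obtain r ext where "gam (node_at r) = insert \<psi> (box_body (node_at w) a)"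
    "r @ ext \<in> W" "hlen (r @ ext) = hlen r"
    using world_below by blast
  then show ?thesis using R_to_world_below[OF assms(1)] by blast
qed


text \<open>A pending end of a chain is an atomic diamond at a world whose fulfilment was delegated,
  through the history, to the \<open>j\<close>-th existential step on the path; \<open>k\<close> bounds \<open>j\<close>.\<close>
definition pending :: "prg \<Rightarrow> fml \<Rightarrow> nat \<Rightarrow> nat list \<times> fml \<Rightarrow> bool" where
  "pending \<alpha> \<psi> k x \<longleftrightarrow> (\<exists>a \<phi> j. snd x = Dia (AP a) \<phi> \<and> fst x \<in> W \<and>
     Dia (AP a) \<phi> \<in> gam (node_at (fst x)) \<and> Dia (AP a) \<phi> \<in> ppre (Dia (Star \<alpha>) \<psi>) \<and>
     0 < j \<and> j \<le> k \<and> j \<le> hlen (fst x) \<and> hcr (node_at (fst x)) ! (j - 1) = hcr_entry (node_at (fst x)) a \<phi>)"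

definition chain_end :: "prg \<Rightarrow> fml \<Rightarrow> nat \<Rightarrow> nat list \<times> fml \<Rightarrow> bool" where
  "chain_end \<alpha> \<psi> k x \<longleftrightarrow> snd x = \<psi> \<or> pending \<alpha> \<psi> k x"

definition chain_below :: "prg \<Rightarrow> fml \<Rightarrow> nat list \<Rightarrow> fml \<Rightarrow> nat \<Rightarrow> bool" where
  "chain_below \<alpha> \<psi> \<pi> f k \<longleftrightarrow> (\<exists>c ext. chain W R L \<psi> c \<and> hd c = (\<pi> @ ext, f) \<and>
     hlen (\<pi> @ ext) = hlen \<pi> \<and> chain_end \<alpha> \<psi> k (last c))"

lemma chain_end_mono: "chain_end \<alpha> \<psi> k x \<Longrightarrow> k \<le> k' \<Longrightarrow> chain_end \<alpha> \<psi> k' x"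
  unfolding chain_end_def pending_def by (meson order_trans)

lemma chain_below_mono: "chain_below \<alpha> \<psi> \<pi> f k \<Longrightarrow> k \<le> k' \<Longrightarrow> chain_below \<alpha> \<psi> \<pi> f k'"
  unfolding chain_below_def using chain_end_mono by blast

lemma chain_belowI:
  "chain W R L \<psi> c \<Longrightarrow> hd c = (\<pi>, f) \<Longrightarrow> chain_end \<alpha> \<psi> k (last c) \<Longrightarrow> chain_below \<alpha> \<psi> \<pi> f k"
  unfolding chain_below_def by (metis append_Nil2)

lemma chain_entryI:
  "w \<in> W \<Longrightarrow> f \<in> L w \<Longrightarrow> f \<in> ppre (Dia (Star \<alpha>) \<psi>) \<Longrightarrow> chain_entry W L \<psi> (w, f)"
  unfolding chain_entry_def using ppre_DiaD by auto

lemma chain_below_target: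
  assumes "open_pos \<pi>" "\<psi> \<in> gam (node_at \<pi>)"
  shows "chain_below \<alpha> \<psi> \<pi> \<psi> k"
proof -
  obtain ext where ext: "\<pi> @ ext \<in> W" "hlen (\<pi> @ ext) = hlen \<pi>" using world_below[OF assms(1)] by blast
  then have "chain W R L \<psi> [(\<pi> @ ext, \<psi>)]"
    using gam_subset_L_below[OF ext(2)] assms(2) by (auto simp: chain_entry_def intro: ppre_base)
  then show ?thesis using ext(2) unfolding chain_below_def chain_end_def by fastforce
qed

lemma chain_below_child:
  "hlen (\<pi>@[i]) = hlen \<pi> \<Longrightarrow> chain_below \<alpha> \<psi> (\<pi>@[i]) f k \<Longrightarrow> chain_below \<alpha> \<psi> \<pi> f k"
  unfolding chain_below_def by (metis append_Cons append_assoc self_append_conv2)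

lemma chain_below_leads:
  assumes "hlen (\<pi>@[i]) = hlen \<pi>" "f \<in> gam (node_at \<pi>)" "f \<in> ppre (Dia (Star \<alpha>) \<psi>)"
    "\<not> is_atdia f" "g \<in> leads f" "chain_below \<alpha> \<psi> (\<pi>@[i]) g k"
  shows "chain_below \<alpha> \<psi> \<pi> f k"
proof -
  obtain c ext where c: "chain W R L \<psi> c" "hd c = (\<pi>@[i]@ext, g)"
    "hlen (\<pi>@[i]@ext) = hlen (\<pi>@[i])" "chain_end \<alpha> \<psi> k (last c)"
    using assms(6) unfolding chain_below_def by auto
  let ?v = "\<pi>@[i]@ext"
  have "?v \<in> W" using chain_hd[OF c(1)] c(2) unfolding chain_entry_def by simp
  moreover have "f \<in> L ?v" using gam_subset_L_below[of \<pi> "[i]@ext"] assms(1,2) c(3) by auto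
  ultimately have "chain W R L \<psi> ((?v, f) # c)"
    using chain_Cons_leads[OF c(1,2) assms(5,4)] chain_entryI assms(3) body_notin_ppre_Dia by metis
  then show ?thesis
    using c(3,4) assms(1) chain_not_Nil[OF c(1)] unfolding chain_below_def
    by (intro exI[of _ "(?v, f) # c"] exI[of _ "[i]@ext"]) simp
qed

lemma chain_from_dia:
  assumes "w \<in> W" "Dia (AP a) \<phi> \<in> gam (node_at w)" "Dia (AP a) \<phi> \<in> ppre (Dia (Star \<alpha>) \<psi>)"
    "gam (node_at r) = insert \<phi> (box_body (node_at w) a)" "chain_below \<alpha> \<psi> r \<phi> k"
  shows "\<exists>c. chain W R L \<psi> c \<and> hd c = (w, Dia (AP a) \<phi>) \<and> chain_end \<alpha> \<psi> k (last c)"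
proof -
  obtain c ext where c: "chain W R L \<psi> c" "hd c = (r @ ext, \<phi>)" "hlen (r @ ext) = hlen r"
    "chain_end \<alpha> \<psi> k (last c)"
    using assms(5) unfolding chain_below_def by auto
  have "r @ ext \<in> W" using chain_hd[OF c(1)] c(2) unfolding chain_entry_def by simp
  then have "(w, r @ ext) \<in> R a" using R_to_world_below[OF assms(1,4)] c(3) by blast
  moreover have "chain_entry W L \<psi> (w, Dia (AP a) \<phi>)"
    using chain_entryI[OF assms(1) _ assms(3)] gam_subset_L assms(2) by blast
  ultimately have "chain W R L \<psi> ((w, Dia (AP a) \<phi>) # c)"
    using chain_Cons_dia[OF c(1,2)] assms(3) body_notin_ppre_Dia by metis
  then show ?thesis using c(4) chain_not_Nil[OF c(1)] by (intro exI[of _ "(w, Dia (AP a) \<phi>) # c"]) simp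
qed

abbreviation uev_bound :: "nat list \<Rightarrow> fml \<Rightarrow> prg \<Rightarrow> fml \<Rightarrow> nat" where
  "uev_bound \<pi> f \<alpha> \<psi> \<equiv> ubound (uev_at \<pi> f (Dia (Star \<alpha>) \<psi>))"

lemma chain_from_state:
  assumes "\<pi> \<in> W" "f \<in> gam (node_at \<pi>)" "f \<in> ppre (Dia (Star \<alpha>) \<psi>)"
    and IH: "\<And>i g. open_pos (\<pi>@[i]) \<Longrightarrow> g \<in> gam (node_at (\<pi>@[i])) \<Longrightarrow> g \<in> ppre (Dia (Star \<alpha>) \<psi>) \<Longrightarrow>
      chain_below \<alpha> \<psi> (\<pi>@[i]) g (uev_bound (\<pi>@[i]) g \<alpha> \<psi>)"
  shows "\<exists>c. chain W R L \<psi> c \<and> hd c = (\<pi>, f) \<and> chain_end \<alpha> \<psi> (uev_bound \<pi> f \<alpha> \<psi>) (last c)"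
proof -
  have ex: "ex_at \<pi>" and o: "stat_at \<pi> = Open" using world_rule_ex[OF assms(1)] by auto
  have ow: "open_pos \<pi>" using assms(1) unfolding W_def by blast
  obtain a \<phi> where fa: "f = Dia (AP a) \<phi>"
    using ppre_Dia_is_Dia[OF assms(3)] assms(1,2) unfolding W_def is_state_def is_atdia_def is_atbox_def is_lit_def
    by fastforce
  have \<phi>: "\<phi> \<in> ppre (Dia (Star \<alpha>) \<psi>)" using ppre_Dia_body assms(3) fa by blast
  have st: "is_stardia (Dia (Star \<alpha>) \<psi>)" by (simp add: is_stardia_def)
  from ex o assms(2)[unfolded fa] show ?thesis
  proof (cases rule: rule_ex_dia)
    case (new i)
    have oc: "open_pos (\<pi>@[i])" and gc: "gam (node_at (\<pi>@[i])) = insert \<phi> (box_body (node_at \<pi>) a)"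
      using new(1-4) open_pos_child[OF ow new(1)] kids_at_nth[OF new(1)] by auto
    have "uev_at \<pi> (Dia (AP a) \<phi>) (Dia (Star \<alpha>) \<psi>) = uev_at (\<pi>@[i]) \<phi> (Dia (Star \<alpha>) \<psi>)"
      using new(5)[OF st] assms(3) fa kids_at_nth[OF new(1)] by simp
    then have "chain_below \<alpha> \<psi> (\<pi>@[i]) \<phi> (uev_bound \<pi> (Dia (AP a) \<phi>) \<alpha> \<psi>)"
      using IH[OF oc _ \<phi>] gc by simp
    then show ?thesis unfolding fa by (rule chain_from_dia[OF assms(1) assms(2,3)[unfolded fa] gc])
  next
    case (old k)
    have "chain_entry W L \<psi> (\<pi>, f)"
      using chain_entryI[OF assms(1) _ assms(3)] gam_subset_L assms(2) by blast
    moreover have "pending \<alpha> \<psi> (uev_bound \<pi> f \<alpha> \<psi>) (\<pi>, f)"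
      using old assms fa st unfolding pending_def hlen_def by auto
    ultimately show ?thesis unfolding chain_end_def by (intro exI[of _ "[(\<pi>, f)]"]) simp
  qed
qed

lemma chain_below_prin:
  assumes "open_pos \<pi>" "prin_at \<pi> F" "f \<in> gam (node_at \<pi>)" "f \<in> ppre (Dia (Star \<alpha>) \<psi>)"
    and IH: "\<And>i g. open_pos (\<pi>@[i]) \<Longrightarrow> g \<in> gam (node_at (\<pi>@[i])) \<Longrightarrow> g \<in> ppre (Dia (Star \<alpha>) \<psi>) \<Longrightarrow>
      chain_below \<alpha> \<psi> (\<pi>@[i]) g (uev_bound (\<pi>@[i]) g \<alpha> \<psi>)"
  shows "chain_below \<alpha> \<psi> \<pi> f (uev_bound \<pi> f \<alpha> \<psi>)"
proof -
  obtain i g where i: "i < length (kids_at \<pi>)" "stat_at (\<pi>@[i]) = Open" "g \<in> gam (node_at (\<pi>@[i]))"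
    "g = f \<or> (f = F \<and> g \<in> leads F)" "g = \<psi> \<or> uev_bound (\<pi>@[i]) g \<alpha> \<psi> \<le> uev_bound \<pi> f \<alpha> \<psi>"
    using prin_rule_uev_progress[OF assms(2) open_pos_stat[OF assms(1)] assms(3,4)] kids_at_nth
    unfolding uev_progress_def by fastforce
  have oc: "open_pos (\<pi>@[i])" using open_pos_child[OF assms(1) i(1,2)] .
  have hc: "hlen (\<pi>@[i]) = hlen \<pi>" using hlen_prin_child[OF assms(2) i(1)] .
  have F: "\<not> is_atdia F" using prin_rule_child(3)[OF assms(2) i(1)] .
  have f: "f \<noteq> \<psi>" using assms(4) body_notin_ppre_Dia by blast
  show ?thesis
  proof (cases "g = \<psi>")
    case True
    then show ?thesis
      using chain_below_leads[OF hc assms(3,4)] chain_below_target[OF oc i(3)] i(4) f F by auto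
  next
    case False
    then have "g \<in> ppre (Dia (Star \<alpha>) \<psi>)" using leads_ppre assms(4) i(4) by blast
    then have "chain_below \<alpha> \<psi> (\<pi>@[i]) g (uev_bound \<pi> f \<alpha> \<psi>)"
      using chain_below_mono[OF IH[OF oc i(3)]] i(5) False by blast
    then show ?thesis
      using chain_below_child[OF hc] chain_below_leads[OF hc assms(3,4)] i(4) F by auto
  qed
qed

lemma chain_below_uev_aux:
  "subtab T \<pi> = t \<Longrightarrow> open_pos \<pi> \<Longrightarrow> f \<in> gam (node_at \<pi>) \<Longrightarrow> f \<in> ppre (Dia (Star \<alpha>) \<psi>) \<Longrightarrow>
   chain_below \<alpha> \<psi> \<pi> f (uev_bound \<pi> f \<alpha> \<psi>)"
proof (induction t arbitrary: \<pi> f)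
  case (Tab p s u cs)
  have IH: "chain_below \<alpha> \<psi> (\<pi>@[i]) g (uev_bound (\<pi>@[i]) g \<alpha> \<psi>)"
    if "open_pos (\<pi>@[i])" "g \<in> gam (node_at (\<pi>@[i]))" "g \<in> ppre (Dia (Star \<alpha>) \<psi>)" for i g
  proof -
    have "i < length (kids_at \<pi>)" using that(1) valid_pos_child open_pos_valid by blast
    then have "subtab T (\<pi>@[i]) \<in> set cs" using subtab_child_mem Tab.prems(1) by fastforce
    then show ?thesis using Tab.IH that by blast
  qed
  from Tab.prems(2) show ?case
  proof (cases rule: open_node_cases)
    case state
    then have "\<pi> \<in> W" using Tab.prems(2) unfolding W_def by blast
    then show ?thesis using chain_from_state IH Tab.prems(3,4) chain_belowI by meson
  next
    case (prin F i)
    then show ?thesis using chain_below_prin IH Tab.prems(2-4) by blast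
  qed
qed

text \<open>The \<open>uev\<close> values bound the history index to which a chain following the
  eventuality inside the subtableau may be deferred.\<close>
lemma chain_below_uev:
  "open_pos \<pi> \<Longrightarrow> f \<in> gam (node_at \<pi>) \<Longrightarrow> f \<in> ppre (Dia (Star \<alpha>) \<psi>) \<Longrightarrow>
   chain_below \<alpha> \<psi> \<pi> f (uev_bound \<pi> f \<alpha> \<psi>)"
  using chain_below_uev_aux by blast

lemma pending_step:
  assumes "pending \<alpha> \<psi> k x"
  shows "\<exists>c. chain W R L \<psi> c \<and> hd c = x \<and> chain_end \<alpha> \<psi> (k - 1) (last c)"
proof -
  obtain w a \<phi> j where x: "x = (w, Dia (AP a) \<phi>)" and w: "w \<in> W"
    and dia: "Dia (AP a) \<phi> \<in> gam (node_at w)" "Dia (AP a) \<phi> \<in> ppre (Dia (Star \<alpha>) \<psi>)"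
    and j: "0 < j" "j \<le> k" "j \<le> hlen w" "hcr (node_at w) ! (j - 1) = hcr_entry (node_at w) a \<phi>"
    using assms unfolding pending_def by (metis prod.collapse)
  have ow: "open_pos w" using w unfolding W_def by blast
  obtain m where m: "m < length w" "gam (node_at (take (Suc m) w)) = insert \<phi> (box_body (node_at w) a)"
    "\<And>\<psi>' k'. is_stardia \<psi>' \<Longrightarrow> \<phi> \<in> ppre \<psi>' \<Longrightarrow> uev_at (take (Suc m) w) \<phi> \<psi>' = Some k' \<Longrightarrow> k' \<le> j - 1"
    using hcr_entry_origin[OF ow j(1,3) j(4)[unfolded hcr_entry_def]] by blast
  have \<phi>: "\<phi> \<in> ppre (Dia (Star \<alpha>) \<psi>)" using ppre_Dia_body dia(2) by blast
  have "uev_bound (take (Suc m) w) \<phi> \<alpha> \<psi> \<le> k - 1"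
    using m(3)[OF _ \<phi>] j(2) by (cases "uev_at (take (Suc m) w) \<phi> (Dia (Star \<alpha>) \<psi>)") (auto simp: is_stardia_def)
  then have "chain_below \<alpha> \<psi> (take (Suc m) w) \<phi> (k - 1)"
    using chain_below_mono chain_below_uev[OF open_pos_take[OF ow] _ \<phi>] m(2) by blast
  then show ?thesis using chain_from_dia[OF w dia m(2)] x by blast
qed

text \<open>The delegation index strictly decreases along the history, so every pending end
  is eventually resolved.\<close>
lemma pending_fulfilled:
  "pending \<alpha> \<psi> k x \<Longrightarrow> \<exists>c. chain W R L \<psi> c \<and> hd c = x \<and> snd (last c) = \<psi>"
proof (induction k arbitrary: x rule: less_induct)
  case (less k)
  obtain c where c: "chain W R L \<psi> c" "hd c = x" "chain_end \<alpha> \<psi> (k - 1) (last c)"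
    using pending_step[OF less.prems] by blast
  have "0 < k" using less.prems unfolding pending_def by auto
  show ?case
  proof (cases "snd (last c) = \<psi>")
    case False
    then have "pending \<alpha> \<psi> (k - 1) (last c)" using c(3) unfolding chain_end_def by blast
    then have "\<exists>c'. chain W R L \<psi> c' \<and> hd c' = last c \<and> snd (last c') = \<psi>"
      using less.IH[of "k - 1" "last c"] \<open>0 < k\<close> by simp
    then obtain c' where "chain W R L \<psi> c'" "hd c' = last c" "snd (last c') = \<psi>" by blast
    then show ?thesis using chain_append_last[OF c(1)] c(2) by metis
  qed (use c in blast)
qed

lemma chain_complete:
  assumes "chain W R L \<psi> c" "chain_end \<alpha> \<psi> k (last c)"
  shows "\<exists>c'. chain W R L \<psi> c' \<and> hd c' = hd c \<and> snd (last c') = \<psi>"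
proof (cases "snd (last c) = \<psi>")
  case False
  then obtain c2 where "chain W R L \<psi> c2" "hd c2 = last c" "snd (last c2) = \<psi>"
    using pending_fulfilled assms(2) unfolding chain_end_def by blast
  then show ?thesis using chain_append_last[OF assms(1)] by metis
qed (use assms in blast)

lemma world_dia_fulfilled:
  assumes "w \<in> W" "f \<in> gam (node_at w)" "f \<in> ppre (Dia (Star \<alpha>) \<psi>)"
  shows "\<exists>c. chain W R L \<psi> c \<and> hd c = (w, f) \<and> snd (last c) = \<psi>"
  using chain_from_state[OF assms chain_below_uev] open_pos_valid chain_complete by metis

definition world_chain :: "prg \<Rightarrow> fml \<Rightarrow> nat list \<Rightarrow> fml \<Rightarrow> bool" where
  "world_chain \<alpha> \<psi> w f \<longleftrightarrow> (\<exists>c. chain W R L \<psi> c \<and> hd c = (w, f) \<and>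
     (snd (last c) = \<psi> \<or> fst (last c) = w \<and> snd (last c) \<in> gam (node_at w) \<and>
        snd (last c) \<in> ppre (Dia (Star \<alpha>) \<psi>)))"

lemma world_chain_here:
  "w \<in> W \<Longrightarrow> f \<in> gam (node_at w) \<Longrightarrow> f \<in> ppre (Dia (Star \<alpha>) \<psi>) \<Longrightarrow> world_chain \<alpha> \<psi> w f"
  unfolding world_chain_def using chain_entryI gam_subset_L by (fastforce intro!: exI[of _ "[(w, f)]"])

lemma world_chain_target:
  assumes "w \<in> W" "\<psi> \<in> L w"
  shows "world_chain \<alpha> \<psi> w \<psi>"
proof -
  have "chain W R L \<psi> [(w, \<psi>)]" using assms ppre_base by (simp add: chain_entry_def)
  then show ?thesis unfolding world_chain_def by fastforce
qed

lemma world_chain_leads: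
  assumes "w \<in> W" "f \<in> L w" "f \<in> ppre (Dia (Star \<alpha>) \<psi>)" "\<not> is_atdia f" "g \<in> leads f"
    "world_chain \<alpha> \<psi> w g"
  shows "world_chain \<alpha> \<psi> w f"
proof -
  obtain c where c: "chain W R L \<psi> c" "hd c = (w, g)"
    "snd (last c) = \<psi> \<or> fst (last c) = w \<and> snd (last c) \<in> gam (node_at w) \<and>
       snd (last c) \<in> ppre (Dia (Star \<alpha>) \<psi>)"
    using assms(6) unfolding world_chain_def by blast
  have "chain W R L \<psi> ((w, f) # c)"
    using chain_Cons_leads[OF c(1,2) assms(5,4) chain_entryI[OF assms(1-3)]] assms(3)
      body_notin_ppre_Dia by blast
  then show ?thesis
    using c(3) chain_not_Nil[OF c(1)] unfolding world_chain_def by (intro exI[of _ "(w, f) # c"]) simp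
qed

lemma world_chain_along:
  assumes "w \<in> W" "m \<le> length w" "hlen (take m w) = hlen w" "f \<in> gam (node_at (take m w))"
    "f \<in> ppre (Dia (Star \<alpha>) \<psi>)"
  shows "world_chain \<alpha> \<psi> w f"
  using assms(2-5)
proof (induction m arbitrary: f rule: inc_induct)
  case base
  then show ?case using world_chain_here[OF assms(1)] by simp
next
  case (step n)
  have v: "valid_pos T w" using world_valid_pos[OF assms(1)] .
  have "hlen (take n w) \<le> hlen (take (Suc n) w)" "hlen (take (Suc n) w) \<le> hlen w"
    using hlen_mono[OF v, of n "Suc n"] hlen_mono[OF v, of "Suc n" "length w"] step.hyps by auto
  then have eq: "hlen (take (Suc n) w) = hlen (take n w)" "hlen (take (Suc n) w) = hlen w"
    using step.prems(1) by auto
  obtain F where pr: "prin_at (take n w) F" using hlen_step_along[OF v step.hyps(2)] eq(1) by auto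
  note child = prin_rule_along_child[OF v step.hyps(2) pr]
  show ?case
  proof (cases "f = F")
    case False
    then show ?thesis using step.IH[OF eq(2) _ step.prems(3)] child(1) step.prems(2) by blast
  next
    case True
    obtain K where K: "K \<in> leads f" "K \<in> gam (node_at (take (Suc n) w))"
      using child(8) ppre_Dia_is_Dia[OF step.prems(3)] True by blast
    have "world_chain \<alpha> \<psi> w K"
      using world_chain_target[OF assms(1) in_LI[OF _ eq(2) K(2)]] step.hyps(2)
        step.IH[OF eq(2) K(2)] leads_ppre[OF step.prems(3) K(1)] by fastforce
    then show ?thesis
      using world_chain_leads[OF assms(1) in_LI[OF _ step.prems(1,2)] step.prems(3) _ K(1)]
        step.hyps(2) child(2) True by simp
  qed
qed

lemma L_star:
  assumes "w \<in> W" "Dia (Star \<alpha>) \<psi> \<in> L w"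
  shows "\<exists>c. fulfilling_chain W R L \<psi> (Star \<alpha>) w c"
proof -
  obtain n where n: "n \<le> length w" "hlen (take n w) = hlen w" "Dia (Star \<alpha>) \<psi> \<in> gam (node_at (take n w))"
    using in_LE[OF assms(2)] by blast
  obtain c where c: "chain W R L \<psi> c" "hd c = (w, Dia (Star \<alpha>) \<psi>)"
    "snd (last c) = \<psi> \<or> fst (last c) = w \<and> snd (last c) \<in> gam (node_at w) \<and>
       snd (last c) \<in> ppre (Dia (Star \<alpha>) \<psi>)"
    using world_chain_along[OF assms(1) n ppre_base] unfolding world_chain_def by blast
  have "\<exists>c'. chain W R L \<psi> c' \<and> hd c' = (w, Dia (Star \<alpha>) \<psi>) \<and> snd (last c') = \<psi>"
  proof (cases "snd (last c) = \<psi>")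
    case False
    then obtain c2 where "chain W R L \<psi> c2" "hd c2 = last c" "snd (last c2) = \<psi>"
      using world_dia_fulfilled[OF assms(1)] c(3) by (metis prod.collapse)
    then show ?thesis using chain_append_last[OF c(1)] c(2) by metis
  qed (use c in blast)
  then obtain c' where "chain W R L \<psi> c'" "hd c' = (w, Dia (Star \<alpha>) \<psi>)" "snd (last c') = \<psi>"
    by blast
  then show ?thesis by (intro exI fulfilling_chainI)
qed

lemma hintikka_model: "hintikka_structure W R L \<phi>0"
proof -
  obtain w where w: "w \<in> W" "hlen w = 0" using world_below[OF open_pos_root] hlen_root by auto
  have "\<phi>0 \<in> L w" using in_LI[of 0 w \<phi>0] w root hlen_root by (simp add: node_at_def)
  then have "is_structure W R L \<phi>0" unfolding is_structure_def R_def using w by blast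
  then show ?thesis unfolding hintikka_structure_def
    using L_no_clash L_alpha L_beta L_dia L_box L_star by blast
qed

end

section \<open>Renaming the worlds\<close>

lemma fulfilling_chain_inj_image:
  assumes "inj f" "fulfilling_chain W R L \<phi> \<beta> w c"
  shows "fulfilling_chain (f ` W) (\<lambda>a. map_prod f f ` R a) (\<lambda>n. L (inv f n)) \<phi> \<beta> (f w) (map (apfst f) c)"
proof -
  note fc = assms(2)[unfolded fulfilling_chain_def]
  have Rf: "(f x, f y) \<in> map_prod f f ` R a \<longleftrightarrow> (x, y) \<in> R a" for x y a
    using assms(1) by (auto simp: inj_eq)
  have nth: "i < length c \<Longrightarrow> map (apfst f) c ! i = (f (fst (c!i)), snd (c!i))" for i
    by (simp add: apfst_def map_prod_def split: prod.splits)
  have iv: "inv f (f x) = x" for x using assms(1) by simp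
  let ?c = "map (apfst f) c"
  show ?thesis unfolding fulfilling_chain_def
  proof (intro conjI allI impI)
    show "?c \<noteq> []" "?c ! 0 = (f w, Dia \<beta> \<phi>)" "snd (last ?c) = \<phi>"
      using fc nth[of 0] by (auto simp: last_map)
  next
    fix i assume "i < length ?c"
    then show "fst (?c ! i) \<in> f ` W" "snd (?c ! i) \<in> ppre \<phi>" "snd (?c ! i) \<in> L (inv f (fst (?c ! i)))"
      using fc by (auto simp: nth iv)
  next
    fix i assume "i < length ?c - 1"
    then show "snd (?c ! i) \<noteq> \<phi>" using fc by (auto simp: nth)
  next
    fix i assume i: "Suc i < length ?c"
    with fc have "case atdia_parts (snd (c ! i)) of
        Some (a, \<chi>) \<Rightarrow> snd (c ! Suc i) = \<chi> \<and> (fst (c ! i), fst (c ! Suc i)) \<in> R a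
      | None \<Rightarrow> snd (c ! Suc i) \<in> leads (snd (c ! i)) \<and> fst (c ! i) = fst (c ! Suc i)"
      by simp
    with i show "case atdia_parts (snd (?c ! i)) of
        Some (a, \<chi>) \<Rightarrow> snd (?c ! Suc i) = \<chi> \<and> (fst (?c ! i), fst (?c ! Suc i)) \<in> map_prod f f ` R a
      | None \<Rightarrow> snd (?c ! Suc i) \<in> leads (snd (?c ! i)) \<and> fst (?c ! i) = fst (?c ! Suc i)"
      by (auto simp: nth Rf inj_eq[OF assms(1)] split: option.splits)
  qed
qed

lemma hintikka_structureD:
  assumes "hintikka_structure W R L \<phi>"
  shows "is_structure W R L \<phi>"
    and "x \<in> W \<Longrightarrow> Neg (Atom p) \<in> L x \<Longrightarrow> Atom p \<notin> L x"
    and "x \<in> W \<Longrightarrow> g \<in> L x \<Longrightarrow> alpha_comps g \<subseteq> L x"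
    and "x \<in> W \<Longrightarrow> g \<in> L x \<Longrightarrow> beta_comps g = Some (b1, b2) \<Longrightarrow> b1 \<in> L x \<or> b2 \<in> L x"
    and "x \<in> W \<Longrightarrow> Dia (AP a) \<phi>' \<in> L x \<Longrightarrow> \<exists>y. (x, y) \<in> R a \<and> \<phi>' \<in> L y"
    and "x \<in> W \<Longrightarrow> Box (AP a) \<phi>' \<in> L x \<Longrightarrow> (x, y) \<in> R a \<Longrightarrow> \<phi>' \<in> L y"
    and "x \<in> W \<Longrightarrow> Dia (Star \<alpha>) \<phi>' \<in> L x \<Longrightarrow> \<exists>c. fulfilling_chain W R L \<phi>' (Star \<alpha>) x c"
  using assms unfolding hintikka_structure_def by blast+

lemma hintikka_structure_inj_image:
  assumes "inj f" "hintikka_structure W R L \<phi>"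
  shows "hintikka_structure (f ` W) (\<lambda>a. map_prod f f ` R a) (\<lambda>n. L (inv f n)) \<phi>"
proof -
  note H = hintikka_structureD[OF assms(2)]
  have iv: "inv f (f x) = x" for x using assms(1) by simp
  have R: "(f x, v) \<in> map_prod f f ` R a \<longleftrightarrow> (\<exists>y. v = f y \<and> (x, y) \<in> R a)" for x v a
    using assms(1) by (auto simp: inj_eq)
  show ?thesis unfolding hintikka_structure_def
  proof (intro conjI ballI allI impI)
    show "is_structure (f ` W) (\<lambda>a. map_prod f f ` R a) (\<lambda>n. L (inv f n)) \<phi>"
      using H(1) unfolding is_structure_def by (force simp: iv)
  next
    fix v p assume "v \<in> f ` W" "Neg (Atom p) \<in> L (inv f v)"
    then show "Atom p \<notin> L (inv f v)" using H(2) by (clarsimp simp: iv)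
  next
    fix v g assume "v \<in> f ` W" "g \<in> L (inv f v)"
    then show "alpha_comps g \<subseteq> L (inv f v)" using H(3) by (clarsimp simp: iv) blast
  next
    fix v g b1 b2 assume "v \<in> f ` W" "g \<in> L (inv f v)" "beta_comps g = Some (b1, b2)"
    then show "b1 \<in> L (inv f v) \<or> b2 \<in> L (inv f v)" using H(4) by (clarsimp simp: iv) blast
  next
    fix v a \<phi>' assume "v \<in> f ` W" and dia: "Dia (AP a) \<phi>' \<in> L (inv f v)"
    then obtain x where x: "x \<in> W" "v = f x" by blast
    then obtain y where "(x, y) \<in> R a" "\<phi>' \<in> L y" using H(5) dia iv by metis
    with x(2) show "\<exists>u. (v, u) \<in> map_prod f f ` R a \<and> \<phi>' \<in> L (inv f u)" using R iv by metis
  next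
    fix v a \<phi>' u assume "v \<in> f ` W" and box: "Box (AP a) \<phi>' \<in> L (inv f v)"
      and vu: "(v, u) \<in> map_prod f f ` R a"
    then obtain x where x: "x \<in> W" "v = f x" by blast
    with vu obtain y where "u = f y" "(x, y) \<in> R a" using R[of x u a] by auto
    then show "\<phi>' \<in> L (inv f u)" using H(6)[OF x(1)] box x(2) iv by metis
  next
    fix v \<alpha> \<phi>' assume "v \<in> f ` W" and dia: "Dia (Star \<alpha>) \<phi>' \<in> L (inv f v)"
    then obtain x where x: "x \<in> W" "v = f x" by blast
    then obtain c where "fulfilling_chain W R L \<phi>' (Star \<alpha>) x c" using H(7) dia iv by metis
    with x(2) show "\<exists>c. fulfilling_chain (f ` W) (\<lambda>a. map_prod f f ` R a) (\<lambda>n. L (inv f n)) \<phi>' (Star \<alpha>) v c"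
      using fulfilling_chain_inj_image[OF assms(1)] by blast
  qed
qed

theorem theorem4p7:
  fixes \<phi> :: fml and T :: tab
  assumes "is_nnf \<phi>"
    and "expanded_tableau T"
    and "tnode T = \<lparr>gam = {\<phi>}, hcr = [], nx = None, bd = {}, bb = {}\<rparr>"
    and "tstat T = Open"
  shows "\<exists>(W :: nat set) R L. hintikka_structure W R L \<phi>"
proof -
  interpret open_tableau T \<phi> using assms(2-4) by unfold_locales
  show ?thesis using hintikka_structure_inj_image[OF inj_to_nat hintikka_model] by blast
qed

end
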